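(* Let $c_0>0$, $T>0$, and let $(\hat u,\hat v)$ be a smooth solution of the NLDE on $\mathbb{R}\times[0,T]$ with $\mathcal{M}_0,\mathcal{M}<\infty$. There exist constants $\hat C_4,\hat C_5>0$, depending only on $c_0,\mathcal{M}_0,\mathcal{M},m,\alpha,\beta$, such that for every $\tau\in(0,1)$, every time-splitting solution with mesh $\tau$ whose initial data satisfy $\sum_j(|u_j^0|^2+|v_j^0|^2)\tau\le c_0$, all $j\in\mathbb{Z}$ and all integers $n\ge0$ with $(n+1)\tau\le T$, $$|\mathcal{U}_j^n(\tau)|^2\le|\mathcal{U}_j^n(0)|^2+\hat C_4\big(\tilde{\mathcal{L}}_j^n(0)+\tilde{\mathcal{D}}_j^n(0)\big)\tau+\hat C_5\mathcal{M}^2\tau^2,$$ $$|\mathcal{V}_{j+2}^n(\tau)|^2\le|\mathcal{V}_{j+2}^n(0)|^2+\hat C_4\big(\tilde{\mathcal{L}}_j^n(0)+\tilde{\mathcal{D}}_j^n(0)\big)\tau+\hat C_5\mathcal{M}^2\tau^2.$$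
   Context: Fix constants $m\ge 0$ and $\alpha,\beta\in\mathbb{R}$. The NLDE for $(u,v):\mathbb{R}\times[0,T]\to\mathbb{C}^2$ is $u_t+u_x=imv+i\alpha u|v|^2+2i\beta(\bar u v+u\bar v)v$, $v_t-v_x=imu+i\alpha v|u|^2+2i\beta(\bar u v+u\bar v)u$. Let (N) denote the ODE system on $\mathbb{C}^2$: $\frac{du}{ds}=imv+i\alpha u|v|^2+2i\beta(\bar u v+u\bar v)v$, $\frac{dv}{ds}=imu+i\alpha v|u|^2+2i\beta(\bar u v+u\bar v)u$. Time-splitting scheme with mesh $\tau>0$: given $(u_j^0,v_j^0)_{j\in\mathbb{Z}}\subset\mathbb{C}^2$ with $\sum_j(|u_j^0|^2+|v_j^0|^2)<\infty$, set $(u^{(\tau)},v^{(\tau)})(x,0)=(u_j^0,v_j^0)$ for $x\in[j\tau,(j+1)\tau)$. Inductively, once $(u^{(\tau)},v^{(\tau)})(\cdot,n\tau)$ is defined, set for $t\in[n\tau,(n+1)\tau)$: $u^{(\tau)}(x,t)=u^{(\tau)}(x-(t-n\tau),n\tau)$, $v^{(\tau)}(x,t)=v^{(\tau)}(x+(t-n\tau),n\tau)$; let $(u^{(\tau)},v^{(\tau)})(x,(n+1)\tau-)$ be the left limit in $t$; and for each $x$ define $(u^{(\tau)},v^{(\tau)})(x,(n+1)\tau)$ as the value at $s=\tau$ of the solution of (N) with value $(u^{(\tau)},v^{(\tau)})(x,(n+1)\tau-)$ at $s=0$ (this is globally well defined). Notation: $(u_j^n,v_j^n)=(u^{(\tau)},v^{(\tau)})(j\tau,n\tau)$,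 $(u_j^{n+1-},v_j^{n+1-})=(u^{(\tau)},v^{(\tau)})(j\tau,(n+1)\tau-)$; $(u_j^{n,2}(s),v_j^{n,2}(s))$, $s\in[0,\tau]$, is the solution of (N) with initial value $(u_j^{n+1-},v_j^{n+1-})$. Comparison quantities: $\mathcal{M}_0=\max_{\mathbb{R}\times[0,T]}(|\hat u|+|\hat v|+1)$, $\mathcal{M}=\max_{\mathbb{R}\times[0,T]}(|\hat u_t|+|\hat u_x|+|\hat v_t|+|\hat v_x|+1)$. For $s\in[0,\tau]$: $\mathcal{U}_j^n(s)=\hat u(j\tau+s,n\tau+s)-u_{j+1}^{n,2}(s)$, $\mathcal{V}_{j+2}^n(s)=\hat v((j+2)\tau-s,n\tau+s)-v_{j+1}^{n,2}(s)$, $\tilde{\mathcal{L}}_j^n(s)=|\mathcal{U}_j^n(s)|^2+|\mathcal{V}_{j+2}^n(s)|^2$, $\tilde{\mathcal{D}}_j^n(s)=|\mathcal{U}_j^n(s)|^2|v_{j+1}^{n,2}(s)|^2+|\mathcal{V}_{j+2}^n(s)|^2|u_{j+1}^{n,2}(s)|^2$. *)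

theory Defs
  imports "HOL-Analysis.Analysis"
begin

definition nldeF :: "real \<Rightarrow> real \<Rightarrow> real \<Rightarrow> complex \<times> complex \<Rightarrow> complex \<times> complex" where
  "nldeF m \<alpha> \<beta> p = (let u = fst p; v = snd p in
     (\<i> * of_real m * v + \<i> * of_real \<alpha> * u * of_real ((cmod v)\<^sup>2)
        + 2 * \<i> * of_real \<beta> * (cnj u * v + u * cnj v) * v,
      \<i> * of_real m * u + \<i> * of_real \<alpha> * v * of_real ((cmod u)\<^sup>2)
        + 2 * \<i> * of_real \<beta> * (cnj u * v + u * cnj v) * u))"

definition flowN :: "real \<Rightarrow> real \<Rightarrow> real \<Rightarrow> real \<Rightarrow> complex \<times> complex \<Rightarrow> complex \<times> complex" where
  "flowN m \<alpha> \<beta> s p = (THE z. \<exists>y. y 0 = p \<and>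
       (\<forall>r\<in>{0..s}. (y has_vector_derivative nldeF m \<alpha> \<beta> (y r)) (at r within {0..s})) \<and>
       y s = z)"

text \<open>Time-splitting scheme. ts_state m a b tau u0 v0 n x is the value at (x, n tau);
  ts_left m a b tau u0 v0 n x is the left limit at (x, (n+1) tau).
  (The parameter s below stands for t - n tau.)\<close>
fun ts_state :: "real \<Rightarrow> real \<Rightarrow> real \<Rightarrow> real \<Rightarrow> (int \<Rightarrow> complex) \<Rightarrow> (int \<Rightarrow> complex)
                  \<Rightarrow> nat \<Rightarrow> real \<Rightarrow> complex \<times> complex" where
  "ts_state m \<alpha> \<beta> \<tau> u0 v0 0 x = (u0 \<lfloor>x / \<tau>\<rfloor>, v0 \<lfloor>x / \<tau>\<rfloor>)"
| "ts_state m \<alpha> \<beta> \<tau> u0 v0 (Suc n) x =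
     flowN m \<alpha> \<beta> \<tau>
       (Lim (at_left \<tau>) (\<lambda>s. fst (ts_state m \<alpha> \<beta> \<tau> u0 v0 n (x - s))),
        Lim (at_left \<tau>) (\<lambda>s. snd (ts_state m \<alpha> \<beta> \<tau> u0 v0 n (x + s))))"

definition ts_left :: "real \<Rightarrow> real \<Rightarrow> real \<Rightarrow> real \<Rightarrow> (int \<Rightarrow> complex) \<Rightarrow> (int \<Rightarrow> complex)
                  \<Rightarrow> nat \<Rightarrow> real \<Rightarrow> complex \<times> complex" where
  "ts_left m \<alpha> \<beta> \<tau> u0 v0 n x =
       (Lim (at_left \<tau>) (\<lambda>s. fst (ts_state m \<alpha> \<beta> \<tau> u0 v0 n (x - s))),
        Lim (at_left \<tau>) (\<lambda>s. snd (ts_state m \<alpha> \<beta> \<tau> u0 v0 n (x + s))))"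

definition nlde_solution ::
  "real \<Rightarrow> real \<Rightarrow> real \<Rightarrow> real \<Rightarrow> (real \<Rightarrow> real \<Rightarrow> complex) \<Rightarrow> (real \<Rightarrow> real \<Rightarrow> complex)
   \<Rightarrow> (real \<Rightarrow> real \<Rightarrow> complex) \<Rightarrow> (real \<Rightarrow> real \<Rightarrow> complex)
   \<Rightarrow> (real \<Rightarrow> real \<Rightarrow> complex) \<Rightarrow> (real \<Rightarrow> real \<Rightarrow> complex) \<Rightarrow> bool" where
  "nlde_solution m \<alpha> \<beta> T uh vh ux ut vx vt \<longleftrightarrow>
     (\<forall>x. \<forall>t\<in>{0..T}.
        ((\<lambda>p. uh (fst p) (snd p)) has_derivative (\<lambda>h. of_real (fst h) * ux x t + of_real (snd h) * ut x t))
           (at (x, t) within UNIV \<times> {0..T}) \<and>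
        ((\<lambda>p. vh (fst p) (snd p)) has_derivative (\<lambda>h. of_real (fst h) * vx x t + of_real (snd h) * vt x t))
           (at (x, t) within UNIV \<times> {0..T}) \<and>
        (ut x t + ux x t, vt x t - vx x t) = nldeF m \<alpha> \<beta> (uh x t, vh x t)) \<and>
     continuous_on (UNIV \<times> {0..T}) (\<lambda>p. ux (fst p) (snd p)) \<and>
     continuous_on (UNIV \<times> {0..T}) (\<lambda>p. ut (fst p) (snd p)) \<and>
     continuous_on (UNIV \<times> {0..T}) (\<lambda>p. vx (fst p) (snd p)) \<and>
     continuous_on (UNIV \<times> {0..T}) (\<lambda>p. vt (fst p) (snd p))"

end

theory Submission
  imports Defs
begin

(*
  In one step the scheme transports u to the right and v to the left, exactly along the
  characteristics of the NLDE, and then solves (N) for a time \<tau>.  Read along the characteristics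
  x = j\<tau> + s (for u) and x = (j+2)\<tau> - s (for v), the smooth solution solves (N) as well, except
  that each equation sees the other component on the other characteristic, at distance at most
  2\<tau>; the bound M on the x-derivatives makes this a perturbation of size M\<tau>.  Differentiating the
  error energy |U|^2 + |V|^2 + |U|^2 |v|^2 + |V|^2 |u|^2 along the step, every cubic term is bounded by
  the energy times 1 + |u|^2 + |v|^2.  Since (N) conserves |u|^2 + |v|^2, the scheme conserves the
  discrete mass, so |u|^2 + |v|^2 \<le> c0 / \<tau> and the Gronwall exponent over a step of length \<tau> is
  bounded in terms of c0.  Integrating d|U|^2/ds over the step then gives the estimate.
*)

section \<open>The nonlinearity\<close>

definition nldeF_component :: "real \<Rightarrow> real \<Rightarrow> real \<Rightarrow> complex \<Rightarrow> complex \<Rightarrow> complex" where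
  "nldeF_component m \<alpha> \<beta> x y =
     \<i> * of_real m * y + \<i> * of_real (\<alpha> + 2 * \<beta>) * x * (y * cnj y) + 2 * \<i> * of_real \<beta> * cnj x * y\<^sup>2"

lemma nldeF_Pair: "nldeF m \<alpha> \<beta> (u, v) = (nldeF_component m \<alpha> \<beta> u v, nldeF_component m \<alpha> \<beta> v u)"
  unfolding nldeF_def nldeF_component_def Let_def complex_norm_square
  by (simp add: algebra_simps power2_eq_square)

lemma inner_complex_eq_Re_cnj: "inner x y = Re (cnj x * y)"
  by (simp add: inner_complex_def)

lemma inner_nldeF_self: "inner p (nldeF m \<alpha> \<beta> p) = 0"
proof -
  obtain u v where "p = (u, v)" by force
  then show ?thesis
    by (simp add: nldeF_Pair nldeF_component_def inner_complex_eq_Re_cnj algebra_simps power2_eq_square)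
qed

lemma norm_triple_product_diff_le:
  fixes a b c a' b' c' :: "'a::real_normed_field"
  assumes "norm a \<le> R" "norm b \<le> R" "norm c \<le> R" "norm a' \<le> R" "norm b' \<le> R" "norm c' \<le> R"
  shows "norm (a * b * c - a' * b' * c') \<le> R\<^sup>2 * (norm (a - a') + norm (b - b') + norm (c - c'))"
proof -
  have R: "0 \<le> R" using assms(1) norm_ge_zero order_trans by blast
  have "a * b * c - a' * b' * c' = (a - a') * (b * c) + (b - b') * (a' * c) + (c - c') * (a' * b')"
    by (simp add: algebra_simps)
  then have "norm (a * b * c - a' * b' * c')
      \<le> norm (a - a') * (norm b * norm c) + norm (b - b') * (norm a' * norm c) + norm (c - c') * (norm a' * norm b')"
    by (metis norm_mult norm_triangle_le add_mono order_refl)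
  also have "\<dots> \<le> norm (a - a') * R\<^sup>2 + norm (b - b') * R\<^sup>2 + norm (c - c') * R\<^sup>2"
    unfolding power2_eq_square using assms R by (intro add_mono mult_left_mono mult_mono) auto
  finally show ?thesis by (simp add: algebra_simps)
qed

definition nlde_lip_const :: "real \<Rightarrow> real \<Rightarrow> real \<Rightarrow> real \<Rightarrow> real" where
  "nlde_lip_const m \<alpha> \<beta> R = \<bar>m\<bar> + (2 * \<bar>\<alpha> + 2 * \<beta>\<bar> + 4 * \<bar>\<beta>\<bar>) * R\<^sup>2"

lemma nlde_lip_const_nonneg: "0 \<le> nlde_lip_const m \<alpha> \<beta> R"
  by (simp add: nlde_lip_const_def)

lemma nldeF_component_lipschitz:
  assumes "cmod x \<le> R" "cmod y \<le> R" "cmod x' \<le> R" "cmod y' \<le> R"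
  shows "cmod (nldeF_component m \<alpha> \<beta> x y - nldeF_component m \<alpha> \<beta> x' y')
           \<le> nlde_lip_const m \<alpha> \<beta> R * (cmod (x - x') + cmod (y - y'))"
proof -
  let ?A = "cmod (x - x')" and ?B = "cmod (y - y')"
  have cubic1: "cmod (x * y * cnj y - x' * y' * cnj y') \<le> R\<^sup>2 * (?A + 2 * ?B)"
    using norm_triple_product_diff_le[of x R y "cnj y" x' y' "cnj y'"] assms
    by (simp flip: complex_cnj_diff add: add_ac)
  have cubic2: "cmod (cnj x * y * y - cnj x' * y' * y') \<le> R\<^sup>2 * (?A + 2 * ?B)"
    using norm_triple_product_diff_le[of "cnj x" R y y "cnj x'" y' y'] assms
    by (simp flip: complex_cnj_diff add: add_ac)
  have "nldeF_component m \<alpha> \<beta> x y - nldeF_component m \<alpha> \<beta> x' y'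
      = \<i> * of_real m * (y - y') + \<i> * of_real (\<alpha> + 2 * \<beta>) * (x * y * cnj y - x' * y' * cnj y')
        + 2 * \<i> * of_real \<beta> * (cnj x * y * y - cnj x' * y' * y')"
    unfolding nldeF_component_def by (simp add: algebra_simps power2_eq_square)
  also have "cmod \<dots> \<le> \<bar>m\<bar> * ?B + \<bar>\<alpha> + 2 * \<beta>\<bar> * (R\<^sup>2 * (?A + 2 * ?B)) + 2 * \<bar>\<beta>\<bar> * (R\<^sup>2 * (?A + 2 * ?B))"
    using cubic1 cubic2 by (intro norm_triangle_le add_mono) (auto simp: norm_mult intro!: mult_left_mono simp del: of_real_add)
  also have "\<dots> \<le> \<bar>m\<bar> * (?A + ?B) + (\<bar>\<alpha> + 2 * \<beta>\<bar> + 2 * \<bar>\<beta>\<bar>) * (R\<^sup>2 * (2 * (?A + ?B)))"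
    by (simp add: algebra_simps mult_left_mono)
  also have "\<dots> = nlde_lip_const m \<alpha> \<beta> R * (?A + ?B)"
    by (simp add: nlde_lip_const_def algebra_simps)
  finally show ?thesis .
qed

lemma nldeF_lipschitz: "(4 * nlde_lip_const m \<alpha> \<beta> R)-lipschitz_on (cball 0 R) (nldeF m \<alpha> \<beta>)"
proof (rule lipschitz_onI)
  fix p q :: "complex \<times> complex" assume "p \<in> cball 0 R" "q \<in> cball 0 R"
  moreover obtain x y x' y' where pq: "p = (x, y)" "q = (x', y')" by force
  ultimately have bounds: "cmod x \<le> R" "cmod y \<le> R" "cmod x' \<le> R" "cmod y' \<le> R"
    using norm_fst_le[of x y] norm_snd_le[of y x] norm_fst_le[of x' y'] norm_snd_le[of y' x'] by auto
  have diffs: "cmod (x - x') \<le> dist p q" "cmod (y - y') \<le> dist p q"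
    using norm_fst_le[of "x - x'" "y - y'"] norm_snd_le[of "y - y'" "x - x'"] by (auto simp: pq dist_norm)
  have "dist (nldeF m \<alpha> \<beta> p) (nldeF m \<alpha> \<beta> q)
      \<le> cmod (nldeF_component m \<alpha> \<beta> x y - nldeF_component m \<alpha> \<beta> x' y')
        + cmod (nldeF_component m \<alpha> \<beta> y x - nldeF_component m \<alpha> \<beta> y' x')"
    by (simp add: pq nldeF_Pair dist_norm norm_Pair_le)
  also have "\<dots> \<le> nlde_lip_const m \<alpha> \<beta> R * (cmod (x - x') + cmod (y - y'))
                  + nlde_lip_const m \<alpha> \<beta> R * (cmod (y - y') + cmod (x - x'))"
    by (intro add_mono nldeF_component_lipschitz bounds)
  also have "\<dots> \<le> nlde_lip_const m \<alpha> \<beta> R * (2 * dist p q) + nlde_lip_const m \<alpha> \<beta> R * (2 * dist p q)"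
    using diffs by (intro add_mono mult_left_mono nlde_lip_const_nonneg) auto
  finally show "dist (nldeF m \<alpha> \<beta> p) (nldeF m \<alpha> \<beta> q) \<le> 4 * nlde_lip_const m \<alpha> \<beta> R * dist p q"
    by (simp add: algebra_simps)
qed (simp add: nlde_lip_const_nonneg)

section \<open>The flow of (N)\<close>

definition ode_solution :: "('a::real_normed_vector \<Rightarrow> 'a) \<Rightarrow> real \<Rightarrow> 'a \<Rightarrow> (real \<Rightarrow> 'a) \<Rightarrow> bool" where
  "ode_solution f S p y \<longleftrightarrow>
     y 0 = p \<and> (\<forall>t\<in>{0..S}. (y has_vector_derivative f (y t)) (at t within {0..S}))"

lemma ode_solution_restrict:
  assumes "ode_solution f S p y" "S' \<le> S"
  shows "ode_solution f S' p y"
  using assms unfolding ode_solution_def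
  by (force intro: has_vector_derivative_within_subset[where S = "{0..S}" and T = "{0..S'}"])

lemma has_real_derivative_nonpos_imp_le:
  fixes g :: "real \<Rightarrow> real"
  assumes "\<And>r. r \<in> {0..S} \<Longrightarrow> (g has_real_derivative g' r) (at r within {0..S})"
    and "\<And>r. r \<in> {0..S} \<Longrightarrow> g' r \<le> 0" and t: "t \<in> {0..S}"
  shows "g t \<le> g 0"
proof -
  have "\<exists>x\<in>{0..t}. g t - g 0 = g' x * (t - 0)"
  proof (rule mvt_very_simple)
    fix x assume "0 \<le> x" "x \<le> t"
    then have "(g has_real_derivative g' x) (at x within {0..t})"
      using assms(1)[of x] t by (auto intro: DERIV_subset)
    then show "(g has_derivative (\<lambda>h. g' x * h)) (at x within {0..t})"
      by (simp add: has_field_derivative_def)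
  qed (use t in simp)
  then obtain x where x: "x \<in> {0..t}" "g t - g 0 = g' x * t" by auto
  have "g' x * t \<le> 0" using assms(2)[of x] x t by (intro mult_nonpos_nonneg) auto
  then show ?thesis using x by simp
qed

lemma gronwall_linear:
  fixes \<phi> :: "real \<Rightarrow> real"
  assumes "0 \<le> k" "0 \<le> c"
    and d: "\<And>r. r \<in> {0..S} \<Longrightarrow> (\<phi> has_real_derivative \<phi>' r) (at r within {0..S})"
    and le: "\<And>r. r \<in> {0..S} \<Longrightarrow> \<phi>' r \<le> k * \<phi> r + c" and t: "t \<in> {0..S}"
  shows "\<phi> t \<le> exp (k * t) * (\<phi> 0 + c * t)"
proof -
  define g where "g r = exp (- k * r) * \<phi> r - c * r" for r
  have "g t \<le> g 0"
  proof (rule has_real_derivative_nonpos_imp_le[OF _ _ t])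
    fix r assume r: "r \<in> {0..S}"
    show "(g has_real_derivative (exp (- k * r) * (\<phi>' r - k * \<phi> r) - c)) (at r within {0..S})"
      unfolding g_def using d[OF r] by (auto intro!: derivative_eq_intros simp: algebra_simps)
    have "exp (- k * r) \<le> 1" using assms(1) r by simp
    moreover have "\<phi>' r - k * \<phi> r \<le> c" using le[OF r] by simp
    ultimately have "exp (- k * r) * (\<phi>' r - k * \<phi> r) \<le> c"
      using assms(2) by (smt (verit) exp_gt_zero mult_left_mono mult_left_le_one_le)
    then show "exp (- k * r) * (\<phi>' r - k * \<phi> r) - c \<le> 0" by simp
  qed
  then have "exp (- k * t) * \<phi> t \<le> \<phi> 0 + c * t" by (simp add: g_def)
  then have "exp (k * t) * (exp (- k * t) * \<phi> t) \<le> exp (k * t) * (\<phi> 0 + c * t)"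
    by (rule mult_left_mono) simp
  then show ?thesis by (simp add: exp_minus field_simps)
qed

lemma has_real_derivative_norm_power2:
  fixes y :: "real \<Rightarrow> 'a::real_inner"
  assumes "(y has_vector_derivative D) (at t within s)"
  shows "((\<lambda>r. (norm (y r))\<^sup>2) has_real_derivative 2 * inner (y t) D) (at t within s)"
  using has_derivative_inner[OF assms[unfolded has_vector_derivative_def] assms[unfolded has_vector_derivative_def]]
  unfolding has_field_derivative_def power2_norm_eq_inner
  by (rule has_derivative_eq_rhs) (auto simp: fun_eq_iff inner_commute algebra_simps)

lemma has_real_derivative_cmod_power2:
  fixes y :: "real \<Rightarrow> complex"
  assumes "(y has_vector_derivative D) (at t within s)"
  shows "((\<lambda>r. (cmod (y r))\<^sup>2) has_real_derivative 2 * Re (cnj (y t) * D)) (at t within s)"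
  using has_real_derivative_norm_power2[OF assms] by (simp add: inner_complex_eq_Re_cnj)

lemma ode_solution_norm_eq:
  assumes cons: "\<And>q. inner q (f q) = 0" and y: "ode_solution f S p y" and t: "t \<in> {0..S}"
  shows "norm (y t) = norm p"
proof -
  have "((\<lambda>r. (norm (y r))\<^sup>2) has_real_derivative 0) (at r within {0..S})" if "r \<in> {0..S}" for r
    using has_real_derivative_norm_power2[of y "f (y r)" r "{0..S}"] y that
    by (simp add: ode_solution_def cons)
  then obtain c where "\<And>r. r \<in> {0..S} \<Longrightarrow> (norm (y r))\<^sup>2 = c"
    using has_field_derivative_zero_constant[of "{0..S}" "\<lambda>r. (norm (y r))\<^sup>2"] by auto
  then have "(norm (y t))\<^sup>2 = (norm (y 0))\<^sup>2" using t by auto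
  then show ?thesis using y by (simp add: ode_solution_def power2_eq_iff_nonneg)
qed

lemma ode_solution_unique:
  fixes f :: "'a::real_inner \<Rightarrow> 'a"
  assumes lip: "K-lipschitz_on (cball 0 R) f"
    and y: "ode_solution f S p y" and z: "ode_solution f S p z"
    and y_bounded: "\<And>t. t \<in> {0..S} \<Longrightarrow> norm (y t) \<le> R"
    and z_bounded: "\<And>t. t \<in> {0..S} \<Longrightarrow> norm (z t) \<le> R"
    and t: "t \<in> {0..S}"
  shows "y t = z t"
proof -
  define w where "w r = y r - z r" for r
  have "(norm (w t))\<^sup>2 \<le> exp ((2 * K) * t) * ((norm (w 0))\<^sup>2 + 0 * t)"
  proof (rule gronwall_linear[OF _ _ _ _ t])
    fix r assume r: "r \<in> {0..S}"
    have "(w has_vector_derivative f (y r) - f (z r)) (at r within {0..S})"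
      unfolding w_def using y z r by (auto simp: ode_solution_def intro!: derivative_eq_intros)
    then show "((\<lambda>r. (norm (w r))\<^sup>2) has_real_derivative 2 * inner (w r) (f (y r) - f (z r))) (at r within {0..S})"
      by (rule has_real_derivative_norm_power2)
    have "inner (w r) (f (y r) - f (z r)) \<le> norm (w r) * norm (f (y r) - f (z r))"
      by (rule norm_cauchy_schwarz)
    also have "\<dots> \<le> norm (w r) * (K * norm (w r))"
      unfolding w_def using y_bounded[OF r] z_bounded[OF r]
      by (intro mult_left_mono lipschitz_on_normD[OF lip]) auto
    finally show "2 * inner (w r) (f (y r) - f (z r)) \<le> 2 * K * (norm (w r))\<^sup>2 + 0"
      by (simp add: power2_eq_square algebra_simps)
  qed (use lipschitz_on_nonneg[OF lip] in auto)
  then show ?thesis using y z by (simp add: w_def ode_solution_def)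
qed

primrec picard_iterate :: "('a::banach \<Rightarrow> 'a) \<Rightarrow> 'a \<Rightarrow> nat \<Rightarrow> real \<Rightarrow> 'a" where
  "picard_iterate G p 0 = (\<lambda>t. p)"
| "picard_iterate G p (Suc k) = (\<lambda>t. p + integral {0..t} (\<lambda>r. G (picard_iterate G p k r)))"

lemma continuous_on_picard_iterate:
  assumes "continuous_on UNIV G"
  shows "continuous_on {0..S} (picard_iterate G p k)"
proof (induction k)
  case (Suc k)
  have "continuous_on {0..S} (\<lambda>r. G (picard_iterate G p k r))"
    by (rule continuous_on_compose2[OF assms Suc]) auto
  then have "continuous_on {0..S} (\<lambda>t. integral {0..t} (\<lambda>r. G (picard_iterate G p k r)))"
    by (intro indefinite_integral_continuous_1 integrable_continuous_interval)
  then show ?case by (auto intro: continuous_on_add)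
qed simp

lemma integral_power_from_0:
  assumes "0 \<le> t"
  shows "integral {0..t} (\<lambda>r::real. r ^ n) = t ^ Suc n / Suc n"
proof -
  have "((\<lambda>r. r ^ Suc n / Suc n) has_real_derivative r ^ n) (at r within {0..t})" for r :: real
    by (intro derivative_eq_intros) (auto simp: field_simps simp del: of_nat_Suc)
  then have "((\<lambda>r::real. r ^ n) has_integral t ^ Suc n / Suc n - 0 ^ Suc n / Suc n) {0..t}"
    by (intro fundamental_theorem_of_calculus assms) (simp add: has_real_derivative_iff_has_vector_derivative)
  then show ?thesis by (simp add: integral_unique)
qed

lemma picard_iterate_step_le:
  assumes lip: "L-lipschitz_on UNIV G" and bnd: "\<And>x. norm (G x) \<le> B" and "0 \<le> t"
  shows "norm (picard_iterate G p (Suc k) t - picard_iterate G p k t) \<le> B * L ^ k * t ^ Suc k / fact (Suc k)"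
  using \<open>0 \<le> t\<close>
proof (induction k arbitrary: t)
  case 0
  then show ?case using mult_left_mono[OF bnd[of p], of t] by (simp add: mult.commute)
next
  case (Suc k)
  let ?P = "picard_iterate G p"
  have integrable: "(\<lambda>r. G (?P j r)) integrable_on {0..t}" for j
    using continuous_on_picard_iterate[OF lipschitz_on_continuous_on[OF lip]]
    by (intro integrable_continuous_interval continuous_on_compose2[OF lipschitz_on_continuous_on[OF lip]]) auto
  have "?P (Suc (Suc k)) t - ?P (Suc k) t
      = integral {0..t} (\<lambda>r. G (?P (Suc k) r)) - integral {0..t} (\<lambda>r. G (?P k r))"
    by simp
  also have "\<dots> = integral {0..t} (\<lambda>r. G (?P (Suc k) r) - G (?P k r))"
    by (rule integral_diff[OF integrable integrable, symmetric])
  also have "norm \<dots> \<le> integral {0..t} (\<lambda>r. L * (B * L ^ k / fact (Suc k)) * r ^ Suc k)"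
  proof (rule integral_norm_bound_integral)
    fix r assume r: "r \<in> {0..t}"
    have "norm (G (?P (Suc k) r) - G (?P k r)) \<le> L * norm (?P (Suc k) r - ?P k r)"
      by (rule lipschitz_on_normD[OF lip]) auto
    also have "\<dots> \<le> L * (B * L ^ k * r ^ Suc k / fact (Suc k))"
      using Suc.IH r by (intro mult_left_mono lipschitz_on_nonneg[OF lip]) auto
    finally show "norm (G (?P (Suc k) r) - G (?P k r)) \<le> L * (B * L ^ k / fact (Suc k)) * r ^ Suc k"
      by simp
  qed (intro integrable_diff integrable integrable_continuous_interval continuous_intros)+
  also have "\<dots> = L * (B * L ^ k / fact (Suc k)) * (t ^ Suc (Suc k) / Suc (Suc k))"
    using Suc.prems by (simp only: integral_mult_right integral_power_from_0)
  also have "\<dots> = B * L ^ Suc k * t ^ Suc (Suc k) / fact (Suc (Suc k))"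
    by (simp only: fact_Suc[of "Suc k"]) (simp add: field_simps)
  finally show ?case .
qed

lemma picard_iterate_uniform_limit:
  assumes lip: "L-lipschitz_on UNIV G" and bnd: "\<And>x. norm (G x) \<le> B"
  obtains y where "uniform_limit {0..S} (picard_iterate G p) y sequentially"
proof -
  let ?P = "picard_iterate G p"
  define M where "M i = B * S * ((L * S) ^ i / fact i)" for i
  have "norm (?P (Suc i) t - ?P i t) \<le> M i" if "t \<in> {0..S}" for i t
  proof -
    have L: "0 \<le> L" and B: "0 \<le> B" using lipschitz_on_nonneg[OF lip] order_trans[OF norm_ge_zero bnd] by auto
    have "norm (?P (Suc i) t - ?P i t) \<le> B * L ^ i * t ^ Suc i / fact (Suc i)"
      using that by (intro picard_iterate_step_le[OF lip bnd]) auto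
    also have "\<dots> \<le> B * L ^ i * S ^ Suc i / fact i"
      using that L B by (intro frac_le mult_left_mono power_mono fact_mono) auto
    also have "\<dots> = M i" by (simp add: M_def power_mult_distrib)
    finally show ?thesis .
  qed
  moreover have "summable M"
    unfolding M_def using summable_exp[of "L * S"] by (intro summable_mult) (simp add: field_simps)
  ultimately have "uniform_limit {0..S} (\<lambda>n t. \<Sum>i<n. ?P (Suc i) t - ?P i t)
                     (\<lambda>t. \<Sum>i. ?P (Suc i) t - ?P i t) sequentially"
    by (rule Weierstrass_m_test)
  then have "uniform_limit {0..S} (\<lambda>n t. p + (\<Sum>i<n. ?P (Suc i) t - ?P i t))
               (\<lambda>t. p + (\<Sum>i. ?P (Suc i) t - ?P i t)) sequentially"
    by (intro uniform_limit_add uniform_limit_const)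
  moreover have "p + (\<Sum>i<n. ?P (Suc i) t - ?P i t) = ?P n t" for n t
    using sum_lessThan_telescope[of "\<lambda>i. ?P i t" n] by (simp del: picard_iterate.simps(2))
  ultimately show thesis
    using that by simp
qed

lemma ode_solution_exists_lipschitz:
  fixes G :: "'a::banach \<Rightarrow> 'a"
  assumes lip: "L-lipschitz_on UNIV G" and bnd: "\<And>x. norm (G x) \<le> B" and "0 \<le> S"
  shows "\<exists>y. ode_solution G S p y"
proof -
  let ?P = "picard_iterate G p"
  obtain y where lim: "uniform_limit {0..S} ?P y sequentially"
    using picard_iterate_uniform_limit[OF lip bnd] .
  have cont_G: "continuous_on UNIV G" by (rule lipschitz_on_continuous_on[OF lip])
  have cont_P: "continuous_on {0..S} (\<lambda>r. G (?P n r))" for n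
    by (rule continuous_on_compose2[OF cont_G continuous_on_picard_iterate[OF cont_G]]) auto
  have cont_Gy: "continuous_on {0..S} (\<lambda>r. G (y r))"
    by (rule continuous_on_compose2[OF cont_G uniform_limit_theorem[OF _ lim]])
       (auto intro: always_eventually continuous_on_picard_iterate[OF cont_G])
  have lim_G: "uniform_limit {0..S} (\<lambda>n r. G (?P n r)) (G \<circ> y) sequentially"
    by (rule uniform_limit_compose[OF lim lipschitz_on_uniformly_continuous[OF lip]]) auto
  have integral_eq: "y t = p + integral {0..t} (\<lambda>r. G (y r))" if t: "t \<in> {0..S}" for t
  proof -
    have "uniform_limit (cbox 0 t) (\<lambda>n r. G (?P n r)) (G \<circ> y) sequentially"
      by (rule uniform_limit_on_subset[OF lim_G]) (use t in auto)
    then obtain I J where I: "\<And>n. ((\<lambda>r. G (?P n r)) has_integral I n) {0..t}"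
      and J: "((G \<circ> y) has_integral J) {0..t}" and "I \<longlonglongrightarrow> J"
      by (rule uniform_limit_integral_cbox) (use t in \<open>auto intro: continuous_on_subset[OF cont_P]\<close>)
    then have "(\<lambda>n. ?P (Suc n) t) \<longlonglongrightarrow> p + integral {0..t} (\<lambda>r. G (y r))"
      using integral_unique[OF I] integral_unique[OF J] by (auto intro: tendsto_add simp: o_def)
    moreover have "(\<lambda>n. ?P (Suc n) t) \<longlonglongrightarrow> y t"
      using tendsto_uniform_limitI[OF lim t] by (rule LIMSEQ_Suc)
    ultimately show ?thesis using LIMSEQ_unique by blast
  qed
  have "(y has_vector_derivative G (y t)) (at t within {0..S})" if t: "t \<in> {0..S}" for t
  proof -
    have "((\<lambda>u. p + integral {0..u} (\<lambda>r. G (y r))) has_vector_derivative G (y t)) (at t within {0..S})"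
      using integral_has_vector_derivative[OF cont_Gy t] by (intro derivative_eq_intros) auto
    then show ?thesis
      by (rule has_vector_derivative_transform[OF t, rotated]) (simp add: integral_eq)
  qed
  moreover have "y 0 = p" using integral_eq[of 0] \<open>0 \<le> S\<close> by simp
  ultimately show ?thesis by (auto simp: ode_solution_def)
qed

definition radial_retraction :: "real \<Rightarrow> 'a::real_normed_vector \<Rightarrow> 'a" where
  "radial_retraction R q = (if norm q \<le> R then q else (R / norm q) *\<^sub>R q)"

lemma norm_radial_retraction_le: "0 \<le> R \<Longrightarrow> norm (radial_retraction R q) \<le> R"
  by (simp add: radial_retraction_def)

lemma radial_retraction_eq_closest_point:
  fixes q :: "'a::euclidean_space"
  assumes "0 \<le> R"
  shows "radial_retraction R q = closest_point (cball 0 R) q"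
proof (cases "norm q \<le> R")
  case True
  then show ?thesis by (simp add: radial_retraction_def closest_point_self)
next
  case False
  have dist_eq: "dist q ((R / norm q) *\<^sub>R q) = norm q - R"
  proof -
    have "q - (R / norm q) *\<^sub>R q = (1 - R / norm q) *\<^sub>R q"
      by (simp add: algebra_simps)
    then have "dist q ((R / norm q) *\<^sub>R q) = \<bar>1 - R / norm q\<bar> * norm q"
      by (simp add: dist_norm)
    also have "\<dots> = norm q - R"
      using False assms by (cases "q = 0") (auto simp: field_simps abs_if)
    finally show ?thesis .
  qed
  have "(R / norm q) *\<^sub>R q = closest_point (cball 0 R) q"
  proof (rule closest_point_unique)
    show "(R / norm q) *\<^sub>R q \<in> cball 0 R" using False assms by simp
    show "\<forall>z\<in>cball 0 R. dist q ((R / norm q) *\<^sub>R q) \<le> dist q z"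
      unfolding dist_eq by (auto simp: dist_norm intro: order_trans[OF _ norm_triangle_ineq2])
  qed auto
  then show ?thesis using False by (simp add: radial_retraction_def)
qed

lemma radial_retraction_lipschitz:
  fixes R :: real
  assumes "0 \<le> R"
  shows "1-lipschitz_on UNIV (radial_retraction R :: 'a::euclidean_space \<Rightarrow> 'a)"
  using closest_point_lipschitz[of "cball (0::'a) R"] assms
  by (intro lipschitz_onI) (auto simp: radial_retraction_eq_closest_point)

lemma inner_radial_retraction:
  assumes cons: "\<And>q. inner q (f q) = 0" and "0 < R"
  shows "inner q (f (radial_retraction R q)) = 0"
proof (cases "norm q \<le> R")
  case False
  then have "q = (norm q / R) *\<^sub>R radial_retraction R q" "radial_retraction R q = (R / norm q) *\<^sub>R q"
    using \<open>0 < R\<close> by (auto simp: radial_retraction_def)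
  then show ?thesis using cons by (metis inner_scaleR_left mult_zero_right)
qed (simp add: radial_retraction_def cons)

(* Truncating by the radial retraction onto a ball of radius greater than |p| makes the field
   globally Lipschitz; the truncated field is still conservative, so the solution keeps the norm
   |p| and never reaches the truncation. *)
lemma ode_solution_exists_conservative:
  fixes f :: "'a::euclidean_space \<Rightarrow> 'a"
  assumes lip: "\<And>R. \<exists>K. K-lipschitz_on (cball 0 R) f"
    and cons: "\<And>q. inner q (f q) = 0" and "0 \<le> S"
  shows "\<exists>y. ode_solution f S p y"
proof -
  define R where "R = norm p + 1"
  have R: "0 < R" by (simp add: R_def add_nonneg_pos)
  obtain K where K: "K-lipschitz_on (cball 0 R) f" using lip by blast
  define G where "G = f \<circ> radial_retraction R"
  have "(K * 1)-lipschitz_on UNIV G"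
    unfolding G_def using radial_retraction_lipschitz[of R] R norm_radial_retraction_le[of R]
    by (intro lipschitz_on_compose lipschitz_on_subset[OF K]) auto
  moreover have "norm (G x) \<le> norm (f 0) + K * R" for x
  proof -
    have "norm (G x - f 0) \<le> K * norm (radial_retraction R x - 0)"
      unfolding G_def o_def using R norm_radial_retraction_le[of R x]
      by (intro lipschitz_on_normD[OF K]) auto
    also have "\<dots> \<le> K * R"
      using R norm_radial_retraction_le[of R x] by (intro mult_left_mono lipschitz_on_nonneg[OF K]) auto
    finally show ?thesis by (smt (verit) norm_triangle_ineq2)
  qed
  ultimately obtain y where y: "ode_solution G S p y"
    using ode_solution_exists_lipschitz[OF _ _ \<open>0 \<le> S\<close>] by blast
  have "norm (y t) = norm p" if "t \<in> {0..S}" for t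
    by (rule ode_solution_norm_eq[OF _ y that]) (simp add: G_def inner_radial_retraction[OF cons R])
  then have "G (y t) = f (y t)" if "t \<in> {0..S}" for t
    using that by (simp add: G_def radial_retraction_def R_def)
  then show ?thesis
    using y by (auto simp: ode_solution_def)
qed

lemma flowN_eq:
  assumes y: "ode_solution (nldeF m \<alpha> \<beta>) S p y" and s: "s \<in> {0..S}"
  shows "flowN m \<alpha> \<beta> s p = y s"
proof -
  have y_s: "ode_solution (nldeF m \<alpha> \<beta>) s p y"
    using ode_solution_restrict[OF y] s by simp
  have "z s = y s" if z: "ode_solution (nldeF m \<alpha> \<beta>) s p z" for z
    by (rule ode_solution_unique[OF nldeF_lipschitz z y_s, of "norm p"])
       (use ode_solution_norm_eq[OF inner_nldeF_self] z y_s s in auto)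
  then have "(THE z. \<exists>y. ode_solution (nldeF m \<alpha> \<beta>) s p y \<and> y s = z) = y s"
    using y_s by blast
  then show ?thesis by (simp add: flowN_def ode_solution_def)
qed

lemma ode_solution_flowN:
  assumes "0 \<le> S"
  obtains y where "ode_solution (nldeF m \<alpha> \<beta>) S p y" "\<And>s. s \<in> {0..S} \<Longrightarrow> flowN m \<alpha> \<beta> s p = y s"
proof -
  have "\<exists>y. ode_solution (nldeF m \<alpha> \<beta>) S p y"
    by (rule ode_solution_exists_conservative[OF _ inner_nldeF_self assms]) (use nldeF_lipschitz in blast)
  then show thesis using that flowN_eq by blast
qed

lemma norm_flowN: "0 \<le> s \<Longrightarrow> norm (flowN m \<alpha> \<beta> s p) = norm p"
  by (metis atLeastAtMost_iff order_refl ode_solution_flowN ode_solution_norm_eq inner_nldeF_self)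

lemma power2_norm_prod: "(norm z)\<^sup>2 = (norm (fst z))\<^sup>2 + (norm (snd z))\<^sup>2"
  by (cases z) (simp add: norm_Pair)

lemma has_vector_derivative_fst_snd:
  assumes "(y has_vector_derivative D) (at t within S)"
  shows "((\<lambda>r. fst (y r)) has_vector_derivative fst D) (at t within S)"
    and "((\<lambda>r. snd (y r)) has_vector_derivative snd D) (at t within S)"
  using has_derivative_fst[OF assms[unfolded has_vector_derivative_def]]
    has_derivative_snd[OF assms[unfolded has_vector_derivative_def]]
  by (simp_all add: has_vector_derivative_def)

lemma flowN_components:
  assumes "0 \<le> S"
  obtains a b where "\<And>s. s \<in> {0..S} \<Longrightarrow> flowN m \<alpha> \<beta> s p = (a s, b s)"
    and "\<And>s. s \<in> {0..S} \<Longrightarrow> (a has_vector_derivative nldeF_component m \<alpha> \<beta> (a s) (b s)) (at s within {0..S})"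
    and "\<And>s. s \<in> {0..S} \<Longrightarrow> (b has_vector_derivative nldeF_component m \<alpha> \<beta> (b s) (a s)) (at s within {0..S})"
    and "\<And>s. s \<in> {0..S} \<Longrightarrow> (cmod (a s))\<^sup>2 + (cmod (b s))\<^sup>2 = (norm p)\<^sup>2"
proof -
  obtain y where y: "ode_solution (nldeF m \<alpha> \<beta>) S p y" and flow: "\<And>s. s \<in> {0..S} \<Longrightarrow> flowN m \<alpha> \<beta> s p = y s"
    using ode_solution_flowN[OF assms] by blast
  define a b where "a s = fst (y s)" and "b s = snd (y s)" for s
  have derivs: "(a has_vector_derivative nldeF_component m \<alpha> \<beta> (a s) (b s)) (at s within {0..S}) \<and>
        (b has_vector_derivative nldeF_component m \<alpha> \<beta> (b s) (a s)) (at s within {0..S})"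
    if "s \<in> {0..S}" for s
  proof -
    have "(y has_vector_derivative nldeF m \<alpha> \<beta> (y s)) (at s within {0..S})"
      using y that by (simp add: ode_solution_def)
    moreover have "nldeF m \<alpha> \<beta> (y s) = (nldeF_component m \<alpha> \<beta> (a s) (b s), nldeF_component m \<alpha> \<beta> (b s) (a s))"
      using nldeF_Pair[of m \<alpha> \<beta> "fst (y s)" "snd (y s)"] by (simp add: a_def b_def)
    ultimately have "(y has_vector_derivative
        (nldeF_component m \<alpha> \<beta> (a s) (b s), nldeF_component m \<alpha> \<beta> (b s) (a s))) (at s within {0..S})"
      by simp
    from has_vector_derivative_fst_snd[OF this] show ?thesis
      by (simp add: a_def[abs_def] b_def[abs_def])
  qed
  have norms: "(cmod (a s))\<^sup>2 + (cmod (b s))\<^sup>2 = (norm p)\<^sup>2" if "s \<in> {0..S}" for s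
  proof -
    have "(cmod (a s))\<^sup>2 + (cmod (b s))\<^sup>2 = (norm (y s))\<^sup>2"
      by (simp add: a_def b_def power2_norm_prod[of "y s"])
    then show ?thesis using ode_solution_norm_eq[OF inner_nldeF_self y that] by simp
  qed
  show thesis
  proof (rule that)
    fix s assume "s \<in> {0..S}"
    then show "flowN m \<alpha> \<beta> s p = (a s, b s)" using flow by (simp add: a_def b_def)
  qed (use derivs norms in auto)
qed

section \<open>Grid values of the time-splitting scheme\<close>

fun ts_grid :: "real \<Rightarrow> real \<Rightarrow> real \<Rightarrow> real \<Rightarrow> (int \<Rightarrow> complex) \<Rightarrow> (int \<Rightarrow> complex)
                 \<Rightarrow> nat \<Rightarrow> int \<Rightarrow> complex \<times> complex" where
  "ts_grid m \<alpha> \<beta> \<tau> u0 v0 0 k = (u0 k, v0 k)"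
| "ts_grid m \<alpha> \<beta> \<tau> u0 v0 (Suc n) k =
     flowN m \<alpha> \<beta> \<tau> (fst (ts_grid m \<alpha> \<beta> \<tau> u0 v0 n (k - 1)), snd (ts_grid m \<alpha> \<beta> \<tau> u0 v0 n (k + 1)))"

lemma Lim_at_left_eqI:
  fixes f :: "real \<Rightarrow> 'a::t2_space"
  assumes "b < a" and "\<And>s. b < s \<Longrightarrow> s < a \<Longrightarrow> f s = c"
  shows "Lim (at_left a) f = c"
proof (rule tendsto_Lim)
  have "eventually (\<lambda>s. s \<in> {b<..<a}) (at_left a)"
    by (rule eventually_at_left_real[OF assms(1)])
  then show "(f \<longlongrightarrow> c) (at_left a)"
    by (rule tendsto_eventually[OF eventually_mono]) (use assms(2) in auto)
qed simp

lemma ts_state_eq_ts_grid: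
  assumes "0 < \<tau>" "of_int k * \<tau> < x" "x < (of_int k + 1) * \<tau>"
  shows "ts_state m \<alpha> \<beta> \<tau> u0 v0 n x = ts_grid m \<alpha> \<beta> \<tau> u0 v0 n k"
  using assms(2,3)
proof (induction n arbitrary: x k)
  case 0
  have "\<lfloor>x / \<tau>\<rfloor> = k"
    by (rule floor_unique) (use 0 \<open>0 < \<tau>\<close> in \<open>auto simp: field_simps\<close>)
  then show ?case by simp
next
  case (Suc n)
  have "Lim (at_left \<tau>) (\<lambda>s. fst (ts_state m \<alpha> \<beta> \<tau> u0 v0 n (x - s))) = fst (ts_grid m \<alpha> \<beta> \<tau> u0 v0 n (k - 1))"
  proof (rule Lim_at_left_eqI)
    fix s assume "x - of_int k * \<tau> < s" "s < \<tau>"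
    then show "fst (ts_state m \<alpha> \<beta> \<tau> u0 v0 n (x - s)) = fst (ts_grid m \<alpha> \<beta> \<tau> u0 v0 n (k - 1))"
      using Suc.prems by (subst Suc.IH) (auto simp: algebra_simps)
  qed (use Suc.prems in \<open>simp add: algebra_simps\<close>)
  moreover have "Lim (at_left \<tau>) (\<lambda>s. snd (ts_state m \<alpha> \<beta> \<tau> u0 v0 n (x + s))) = snd (ts_grid m \<alpha> \<beta> \<tau> u0 v0 n (k + 1))"
  proof (rule Lim_at_left_eqI)
    fix s assume "(of_int k + 1) * \<tau> - x < s" "s < \<tau>"
    then show "snd (ts_state m \<alpha> \<beta> \<tau> u0 v0 n (x + s)) = snd (ts_grid m \<alpha> \<beta> \<tau> u0 v0 n (k + 1))"
      using Suc.prems by (subst Suc.IH) (auto simp: algebra_simps)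
  qed (use Suc.prems in \<open>simp add: algebra_simps\<close>)
  ultimately show ?case by (simp only: ts_state.simps ts_grid.simps)
qed

lemma ts_left_eq_ts_grid:
  assumes "0 < \<tau>"
  shows "ts_left m \<alpha> \<beta> \<tau> u0 v0 n (of_int (j + 1) * \<tau>) =
           (fst (ts_grid m \<alpha> \<beta> \<tau> u0 v0 n j), snd (ts_grid m \<alpha> \<beta> \<tau> u0 v0 n (j + 1)))"
proof -
  have "Lim (at_left \<tau>) (\<lambda>s. fst (ts_state m \<alpha> \<beta> \<tau> u0 v0 n (of_int (j + 1) * \<tau> - s)))
      = fst (ts_grid m \<alpha> \<beta> \<tau> u0 v0 n j)"
  proof (rule Lim_at_left_eqI)
    fix s assume "0 < s" "s < \<tau>"
    then show "fst (ts_state m \<alpha> \<beta> \<tau> u0 v0 n (of_int (j + 1) * \<tau> - s)) = fst (ts_grid m \<alpha> \<beta> \<tau> u0 v0 n j)"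
      by (subst ts_state_eq_ts_grid[OF assms, of j]) (auto simp: algebra_simps)
  qed (use assms in simp)
  moreover have "Lim (at_left \<tau>) (\<lambda>s. snd (ts_state m \<alpha> \<beta> \<tau> u0 v0 n (of_int (j + 1) * \<tau> + s)))
      = snd (ts_grid m \<alpha> \<beta> \<tau> u0 v0 n (j + 1))"
  proof (rule Lim_at_left_eqI)
    fix s assume "0 < s" "s < \<tau>"
    then show "snd (ts_state m \<alpha> \<beta> \<tau> u0 v0 n (of_int (j + 1) * \<tau> + s)) = snd (ts_grid m \<alpha> \<beta> \<tau> u0 v0 n (j + 1))"
      by (subst ts_state_eq_ts_grid[OF assms, of "j + 1"]) (auto simp: algebra_simps)
  qed (use assms in simp)
  ultimately show ?thesis by (simp add: ts_left_def)
qed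

lemma has_sum_shift_int:
  assumes "(f has_sum S) (UNIV :: int set)"
  shows "((\<lambda>k. f (k + c)) has_sum S) UNIV"
proof -
  have "bij_betw (\<lambda>k. k + c) (UNIV :: int set) UNIV"
    by (rule bij_betw_byWitness[where f' = "\<lambda>k. k - c"]) auto
  then show ?thesis using has_sum_reindex_bij_betw assms by blast
qed

lemma ts_grid_mass:
  assumes "0 \<le> \<tau>" and "((\<lambda>k. (cmod (u0 k))\<^sup>2 + (cmod (v0 k))\<^sup>2) has_sum N) UNIV"
  shows "((\<lambda>k. (norm (ts_grid m \<alpha> \<beta> \<tau> u0 v0 n k))\<^sup>2) has_sum N) UNIV"
proof (induction n)
  case 0
  then show ?case using assms(2) by (simp add: norm_Pair)
next
  case (Suc n)
  define A where "A k = (cmod (fst (ts_grid m \<alpha> \<beta> \<tau> u0 v0 n k)))\<^sup>2" for k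
  define B where "B k = (cmod (snd (ts_grid m \<alpha> \<beta> \<tau> u0 v0 n k)))\<^sup>2" for k
  have AB: "((\<lambda>k. A k + B k) has_sum N) UNIV"
    using Suc by (simp add: A_def B_def power2_norm_prod)
  obtain NA NB where A: "(A has_sum NA) UNIV" and B: "(B has_sum NB) UNIV"
    using summable_on_comparison_test[OF has_sum_imp_summable[OF AB], of A]
      summable_on_comparison_test[OF has_sum_imp_summable[OF AB], of B]
    by (fastforce simp: A_def B_def summable_on_def)
  have "N = NA + NB"
    using has_sum_unique[OF AB has_sum_add[OF A B]] .
  then have "((\<lambda>k. A (k + - 1) + B (k + 1)) has_sum N) UNIV"
    using has_sum_add[OF has_sum_shift_int[OF A, of "- 1"] has_sum_shift_int[OF B, of 1]] by simp
  moreover have "(norm (ts_grid m \<alpha> \<beta> \<tau> u0 v0 (Suc n) k))\<^sup>2 = A (k + - 1) + B (k + 1)" for k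
    using norm_flowN[OF assms(1)] by (simp add: A_def B_def power2_norm_prod)
  ultimately show ?case by simp
qed

lemma norm_ts_left_power2_le:
  assumes "0 < \<tau>" and "((\<lambda>k. (cmod (u0 k))\<^sup>2 + (cmod (v0 k))\<^sup>2) has_sum N) UNIV"
  shows "(norm (ts_left m \<alpha> \<beta> \<tau> u0 v0 n (of_int (j + 1) * \<tau>)))\<^sup>2 \<le> N"
proof -
  let ?g = "\<lambda>k. (norm (ts_grid m \<alpha> \<beta> \<tau> u0 v0 n k))\<^sup>2"
  have "?g j + ?g (j + 1) \<le> N"
    using has_sum_mono2[OF has_sum_finiteI ts_grid_mass[OF _ assms(2)], of "{j, j + 1}"] assms(1) by auto
  then show ?thesis
    unfolding ts_left_eq_ts_grid[OF assms(1)] power2_norm_prod[of "ts_grid _ _ _ _ _ _ _ _"]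
    by (simp add: power2_norm_prod[of "(_, _)"]) (smt (verit) zero_le_power2)
qed

section \<open>The error energy\<close>

(* With arguments |U|^2, |V|^2, |u|^2, |v|^2 this is L + D in the statement of lemma4p4. *)
definition err_energy :: "real \<Rightarrow> real \<Rightarrow> real \<Rightarrow> real \<Rightarrow> real" where
  "err_energy nu nv na nb = nu + nv + nu * nb + nv * na"

lemma err_energy_nonneg:
  "0 \<le> nu \<Longrightarrow> 0 \<le> nv \<Longrightarrow> 0 \<le> na \<Longrightarrow> 0 \<le> nb \<Longrightarrow> 0 \<le> err_energy nu nv na nb"
  by (simp add: err_energy_def)

lemma err_energy_commute: "err_energy nv nu nb na = err_energy nu nv na nb"
  by (simp add: err_energy_def)

lemma add_le_err_energy:
  "0 \<le> nu \<Longrightarrow> 0 \<le> nv \<Longrightarrow> 0 \<le> na \<Longrightarrow> 0 \<le> nb \<Longrightarrow> nu + nv \<le> err_energy nu nv na nb"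
  by (simp add: err_energy_def)

lemma two_mult_le_power2_add: "2 * (x * y) \<le> x\<^sup>2 + (y::real)\<^sup>2"
  using zero_le_power2[of "x - y"] by (simp add: power2_eq_square algebra_simps)

lemma abs_power2_norm_diff_le:
  fixes x y :: "'a::real_normed_vector"
  shows "\<bar>(norm x)\<^sup>2 - (norm y)\<^sup>2\<bar> \<le> norm (x - y) * (norm x + norm y)"
proof -
  have "(norm x)\<^sup>2 - (norm y)\<^sup>2 = (norm x - norm y) * (norm x + norm y)"
    by (simp add: power2_eq_square algebra_simps)
  then have "\<bar>(norm x)\<^sup>2 - (norm y)\<^sup>2\<bar> = \<bar>norm x - norm y\<bar> * (norm x + norm y)"
    by (simp add: abs_mult)
  also have "\<dots> \<le> norm (x - y) * (norm x + norm y)"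
    by (intro mult_right_mono norm_triangle_ineq3) simp
  finally show ?thesis .
qed

lemma Re_cnj_component_diff_le:
  fixes P Q a b :: complex
  assumes Q: "cmod Q \<le> M0"
  shows "Re (cnj (P - a) * (nldeF_component m \<alpha> \<beta> P Q - nldeF_component m \<alpha> \<beta> a b))
     \<le> \<bar>m\<bar> * (cmod (P - a) * cmod (Q - b)) + 2 * \<bar>\<beta>\<bar> * M0\<^sup>2 * (cmod (P - a))\<^sup>2
       + (\<bar>\<alpha> + 2 * \<beta>\<bar> + 2 * \<bar>\<beta>\<bar>) * (cmod (P - a) * cmod a * cmod (Q - b) * (M0 + cmod b))"
proof -
  define U where "U = P - a"
  define V where "V = Q - b"
  let ?X = "cmod U * cmod a * cmod V * (M0 + cmod b)"
  define z1 where "z1 = \<i> * of_real m * (cnj U * V)"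
  define z3 where "z3 = \<i> * of_real (\<alpha> + 2 * \<beta>) * (cnj U * a * of_real ((cmod Q)\<^sup>2 - (cmod b)\<^sup>2))"
  define z4 where "z4 = 2 * \<i> * of_real \<beta> * (cnj U ^ 2 * Q ^ 2)"
  define z5 where "z5 = 2 * \<i> * of_real \<beta> * (cnj U * cnj a * V * (Q + b))"
  \<comment> \<open>the middle term is purely imaginary, so it drops out of the real part\<close>
  have "cnj U * (nldeF_component m \<alpha> \<beta> P Q - nldeF_component m \<alpha> \<beta> a b)
      = z1 + \<i> * of_real ((\<alpha> + 2 * \<beta>) * ((cmod U)\<^sup>2 * (cmod Q)\<^sup>2)) + z3 + z4 + z5"
    unfolding z1_def z3_def z4_def z5_def U_def V_def nldeF_component_def of_real_mult of_real_diff
      complex_norm_square by (simp add: algebra_simps power2_eq_square)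
  then have "Re (cnj U * (nldeF_component m \<alpha> \<beta> P Q - nldeF_component m \<alpha> \<beta> a b))
      \<le> cmod z1 + cmod z3 + cmod z4 + cmod z5"
    using complex_Re_le_cmod[of z1] complex_Re_le_cmod[of z3] complex_Re_le_cmod[of z4]
      complex_Re_le_cmod[of z5] by simp
  also have "\<dots> \<le> \<bar>m\<bar> * (cmod U * cmod V) + \<bar>\<alpha> + 2 * \<beta>\<bar> * ?X + 2 * \<bar>\<beta>\<bar> * M0\<^sup>2 * (cmod U)\<^sup>2
      + 2 * \<bar>\<beta>\<bar> * ?X"
  proof (intro add_mono)
    show "cmod z1 \<le> \<bar>m\<bar> * (cmod U * cmod V)" by (simp add: z1_def norm_mult)
    have "\<bar>(cmod Q)\<^sup>2 - (cmod b)\<^sup>2\<bar> \<le> cmod V * (M0 + cmod b)"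
      unfolding V_def using abs_power2_norm_diff_le[of Q b] Q
      by (smt (verit) mult_left_mono norm_ge_zero)
    then show "cmod z3 \<le> \<bar>\<alpha> + 2 * \<beta>\<bar> * ?X"
      unfolding z3_def norm_mult norm_of_real
      by (simp add: mult_left_mono mult.assoc del: of_real_add)
    show "cmod z4 \<le> 2 * \<bar>\<beta>\<bar> * M0\<^sup>2 * (cmod U)\<^sup>2"
      unfolding z4_def norm_mult norm_power using Q
      by (simp add: mult_left_mono mult_right_mono power_mono mult.commute mult.left_commute)
    show "cmod z5 \<le> 2 * \<bar>\<beta>\<bar> * ?X"
      unfolding z5_def norm_mult using Q norm_triangle_ineq[of Q b]
      by (simp add: mult_left_mono mult.assoc)
  qed
  finally show ?thesis by (simp add: U_def V_def algebra_simps)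
qed

lemma cross_term_le:
  fixes u v A B M0 :: real
  assumes "0 \<le> u" "0 \<le> v" "0 \<le> A" "0 \<le> B" "0 \<le> M0" "A \<le> M0 + u" "v \<le> M0 + B"
  shows "u * A * v * (M0 + B) \<le> (2 * M0\<^sup>2 + M0 + 1) * err_energy (u\<^sup>2) (v\<^sup>2) (A\<^sup>2) (B\<^sup>2)"
proof -
  have amgm: "x * y \<le> x\<^sup>2 / 2 + y\<^sup>2 / 2" for x y :: real
    using two_mult_le_power2_add[of x y] by simp
  have "M0 * (u * A * v) \<le> M0 * (u * (M0 + u) * v)"
    using assms by (intro mult_left_mono mult_right_mono) auto
  also have "\<dots> = M0\<^sup>2 * (u * v) + M0 * (u * (u * v))"
    by (simp add: power2_eq_square algebra_simps)
  also have "\<dots> \<le> M0\<^sup>2 * (u\<^sup>2 / 2 + v\<^sup>2 / 2) + M0 * (u * (u * (M0 + B)))"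
    using assms by (intro add_mono mult_left_mono amgm) auto
  also have "\<dots> = M0\<^sup>2 * (u\<^sup>2 / 2 + v\<^sup>2 / 2) + M0\<^sup>2 * u\<^sup>2 + M0 * (u * (u * B))"
    by (simp add: power2_eq_square algebra_simps)
  also have "\<dots> \<le> M0\<^sup>2 * (u\<^sup>2 / 2 + v\<^sup>2 / 2) + M0\<^sup>2 * u\<^sup>2 + M0 * (u\<^sup>2 / 2 + (u * B)\<^sup>2 / 2)"
    using assms by (intro add_mono mult_left_mono amgm) auto
  finally have "M0 * (u * A * v) \<le> M0\<^sup>2 * u\<^sup>2 / 2 + M0\<^sup>2 * v\<^sup>2 / 2 + M0\<^sup>2 * u\<^sup>2 + M0 * u\<^sup>2 / 2
      + M0 * (u\<^sup>2 * B\<^sup>2) / 2"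
    by (simp add: power_mult_distrib algebra_simps)
  moreover have "u * A * v * B \<le> u\<^sup>2 * B\<^sup>2 / 2 + v\<^sup>2 * A\<^sup>2 / 2"
    using amgm[of "u * B" "v * A"] by (simp add: power_mult_distrib algebra_simps)
  moreover have "u * A * v * (M0 + B) = M0 * (u * A * v) + u * A * v * B"
    by (simp add: algebra_simps)
  moreover have "(2 * M0\<^sup>2 + M0 + 1) * err_energy (u\<^sup>2) (v\<^sup>2) (A\<^sup>2) (B\<^sup>2)
      = 2 * (M0\<^sup>2 * u\<^sup>2) + 2 * (M0\<^sup>2 * v\<^sup>2) + 2 * (M0\<^sup>2 * (u\<^sup>2 * B\<^sup>2)) + 2 * (M0\<^sup>2 * (v\<^sup>2 * A\<^sup>2))
        + M0 * u\<^sup>2 + M0 * v\<^sup>2 + M0 * (u\<^sup>2 * B\<^sup>2) + M0 * (v\<^sup>2 * A\<^sup>2) + u\<^sup>2 + v\<^sup>2 + u\<^sup>2 * B\<^sup>2 + v\<^sup>2 * A\<^sup>2"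
    by (simp add: err_energy_def algebra_simps)
  moreover have "0 \<le> M0\<^sup>2 * (u\<^sup>2 * B\<^sup>2)" "0 \<le> M0\<^sup>2 * (v\<^sup>2 * A\<^sup>2)" "0 \<le> M0 * v\<^sup>2"
    "0 \<le> M0 * (v\<^sup>2 * A\<^sup>2)" "0 \<le> M0 * u\<^sup>2" "0 \<le> M0 * (u\<^sup>2 * B\<^sup>2)" "0 \<le> M0\<^sup>2 * v\<^sup>2"
    "0 \<le> M0\<^sup>2 * u\<^sup>2" "0 \<le> u\<^sup>2" "0 \<le> v\<^sup>2" "0 \<le> u\<^sup>2 * B\<^sup>2" "0 \<le> v\<^sup>2 * A\<^sup>2"
    using assms by simp_all
  ultimately show ?thesis by linarith
qed

definition energy_const :: "real \<Rightarrow> real \<Rightarrow> real \<Rightarrow> real \<Rightarrow> real" where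
  "energy_const m \<alpha> \<beta> M0 = \<bar>m\<bar> + 4 * \<bar>\<beta>\<bar> * M0\<^sup>2 + (2 * \<bar>\<alpha> + 2 * \<beta>\<bar> + 4 * \<bar>\<beta>\<bar>) * (2 * M0\<^sup>2 + M0 + 1)"

lemma energy_const_nonneg: "0 \<le> energy_const m \<alpha> \<beta> M0"
proof -
  have "0 \<le> 2 * (M0 + 1 / 4)\<^sup>2 + 7 / 8" by simp
  also have "\<dots> = 2 * M0\<^sup>2 + M0 + 1" by (simp add: power2_eq_square algebra_simps)
  finally show ?thesis by (simp add: energy_const_def)
qed

lemma Re_cnj_component_diff_le_energy:
  fixes P Q a b :: complex
  assumes P: "cmod P \<le> M0" and Q: "cmod Q \<le> M0"
  shows "2 * Re (cnj (P - a) * (nldeF_component m \<alpha> \<beta> P Q - nldeF_component m \<alpha> \<beta> a b))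
           \<le> energy_const m \<alpha> \<beta> M0 * err_energy ((cmod (P - a))\<^sup>2) ((cmod (Q - b))\<^sup>2) ((cmod a)\<^sup>2) ((cmod b)\<^sup>2)"
    (is "_ \<le> _ * ?\<Phi>")
proof -
  let ?u = "cmod (P - a)" and ?v = "cmod (Q - b)"
  have M0: "0 \<le> M0" using Q norm_ge_zero order_trans by blast
  have \<Phi>: "?u\<^sup>2 + ?v\<^sup>2 \<le> ?\<Phi>" by (rule add_le_err_energy) auto
  then have uv: "2 * (?u * ?v) \<le> ?\<Phi>" and u: "?u\<^sup>2 \<le> ?\<Phi>"
    using two_mult_le_power2_add[of ?u ?v] zero_le_power2[of ?v] by linarith+
  have "cmod a \<le> M0 + ?u" using P norm_triangle_ineq4[of P "P - a"] by simp
  moreover have "?v \<le> M0 + cmod b" using Q norm_triangle_ineq4[of Q b] by simp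
  ultimately have cross: "?u * cmod a * ?v * (M0 + cmod b) \<le> (2 * M0\<^sup>2 + M0 + 1) * ?\<Phi>"
    using M0 by (intro cross_term_le) auto
  have "2 * Re (cnj (P - a) * (nldeF_component m \<alpha> \<beta> P Q - nldeF_component m \<alpha> \<beta> a b))
      \<le> \<bar>m\<bar> * (2 * (?u * ?v)) + 4 * \<bar>\<beta>\<bar> * M0\<^sup>2 * ?u\<^sup>2
        + (2 * \<bar>\<alpha> + 2 * \<beta>\<bar> + 4 * \<bar>\<beta>\<bar>) * (?u * cmod a * ?v * (M0 + cmod b))"
    using Re_cnj_component_diff_le[OF Q, of P a m \<alpha> \<beta> b] by (simp add: algebra_simps)
  also have "\<dots> \<le> \<bar>m\<bar> * ?\<Phi> + 4 * \<bar>\<beta>\<bar> * M0\<^sup>2 * ?\<Phi> + (2 * \<bar>\<alpha> + 2 * \<beta>\<bar> + 4 * \<bar>\<beta>\<bar>) * ((2 * M0\<^sup>2 + M0 + 1) * ?\<Phi>)"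
    using uv u cross by (intro add_mono mult_left_mono) auto
  also have "\<dots> = energy_const m \<alpha> \<beta> M0 * ?\<Phi>"
    by (simp add: energy_const_def algebra_simps)
  finally show ?thesis .
qed

lemma Re_cnj_component_diff_perturbed_le:
  fixes P Q Q' a b :: complex
  assumes P: "cmod P \<le> M0" and Q: "cmod Q \<le> M0" and Q': "cmod Q' \<le> M0" and \<delta>: "cmod (Q' - Q) \<le> \<delta>"
  shows "2 * Re (cnj (P - a) * (nldeF_component m \<alpha> \<beta> P Q' - nldeF_component m \<alpha> \<beta> a b))
           \<le> (energy_const m \<alpha> \<beta> M0 + 1) * err_energy ((cmod (P - a))\<^sup>2) ((cmod (Q - b))\<^sup>2) ((cmod a)\<^sup>2) ((cmod b)\<^sup>2)
             + (nlde_lip_const m \<alpha> \<beta> M0 * \<delta>)\<^sup>2"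
    (is "_ \<le> _ * ?\<Phi> + _")
proof -
  let ?G = "nldeF_component m \<alpha> \<beta>" and ?K = "nlde_lip_const m \<alpha> \<beta> M0" and ?u = "cmod (P - a)"
  have \<Phi>: "?u\<^sup>2 + (cmod (Q - b))\<^sup>2 \<le> ?\<Phi>" by (rule add_le_err_energy) auto
  have "cmod (?G P Q' - ?G P Q) \<le> ?K * (cmod (P - P) + cmod (Q' - Q))"
    using P Q Q' by (intro nldeF_component_lipschitz) auto
  also have "\<dots> \<le> ?K * \<delta>" using \<delta> by (simp add: mult_left_mono nlde_lip_const_nonneg)
  finally have "?u * cmod (?G P Q' - ?G P Q) \<le> ?u * (?K * \<delta>)"
    by (rule mult_left_mono) simp
  moreover have "Re (cnj (P - a) * (?G P Q' - ?G P Q)) \<le> ?u * cmod (?G P Q' - ?G P Q)"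
    using complex_Re_le_cmod[of "cnj (P - a) * (?G P Q' - ?G P Q)"] by (simp only: norm_mult complex_mod_cnj)
  ultimately have "2 * Re (cnj (P - a) * (?G P Q' - ?G P Q)) \<le> 2 * (?u * (?K * \<delta>))"
    by (intro mult_left_mono) simp_all
  also have "\<dots> \<le> ?u\<^sup>2 + (?K * \<delta>)\<^sup>2"
    by (rule two_mult_le_power2_add)
  also have "\<dots> \<le> ?\<Phi> + (?K * \<delta>)\<^sup>2"
    using \<Phi> zero_le_power2[of "cmod (Q - b)"] by linarith
  finally have "2 * Re (cnj (P - a) * (?G P Q' - ?G P Q)) \<le> ?\<Phi> + (?K * \<delta>)\<^sup>2" .
  moreover have "2 * Re (cnj (P - a) * (?G P Q - ?G a b)) \<le> energy_const m \<alpha> \<beta> M0 * ?\<Phi>"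
    by (rule Re_cnj_component_diff_le_energy[OF P Q])
  ultimately show ?thesis by (simp add: algebra_simps)
qed

lemma Re_cnj_component_self_le:
  "2 * Re (cnj b * nldeF_component m \<alpha> \<beta> b a) \<le> \<bar>m\<bar> * ((cmod a)\<^sup>2 + (cmod b)\<^sup>2) + 4 * \<bar>\<beta>\<bar> * ((cmod a)\<^sup>2 * (cmod b)\<^sup>2)"
proof -
  define z1 where "z1 = \<i> * of_real m * (cnj b * a)"
  define z3 where "z3 = 2 * \<i> * of_real \<beta> * (cnj b ^ 2 * a ^ 2)"
  have "cnj b * nldeF_component m \<alpha> \<beta> b a = z1 + \<i> * of_real ((\<alpha> + 2 * \<beta>) * ((cmod b)\<^sup>2 * (cmod a)\<^sup>2)) + z3"
    unfolding z1_def z3_def nldeF_component_def of_real_mult complex_norm_square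
    by (simp add: algebra_simps power2_eq_square)
  then have "Re (cnj b * nldeF_component m \<alpha> \<beta> b a) \<le> cmod z1 + cmod z3"
    using complex_Re_le_cmod[of z1] complex_Re_le_cmod[of z3] by simp
  then have "2 * Re (cnj b * nldeF_component m \<alpha> \<beta> b a) \<le> 2 * (cmod z1 + cmod z3)"
    by (rule mult_left_mono) simp
  also have "\<dots> = \<bar>m\<bar> * (2 * (cmod a * cmod b)) + 2 * cmod z3"
    by (simp add: z1_def norm_mult)
  also have "\<dots> \<le> \<bar>m\<bar> * ((cmod a)\<^sup>2 + (cmod b)\<^sup>2) + 4 * \<bar>\<beta>\<bar> * ((cmod a)\<^sup>2 * (cmod b)\<^sup>2)"
    using two_mult_le_power2_add[of "cmod a" "cmod b"]
    by (intro add_mono mult_left_mono) (auto simp: z3_def norm_mult norm_power)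
  finally show ?thesis .
qed

lemma err_energy_derivative_le:
  fixes nu nv na nb du dv dna dnb :: real
  assumes nonneg: "0 \<le> nu" "0 \<le> nv" "0 \<le> na" "0 \<le> nb" and "0 \<le> K" "0 \<le> e" "0 \<le> \<mu>" "0 \<le> \<nu>"
    and mass: "na + nb \<le> R"
    and du: "du \<le> K * err_energy nu nv na nb + e" and dv: "dv \<le> K * err_energy nu nv na nb + e"
    and dna: "dna \<le> \<mu> * (na + nb) + \<nu> * (na * nb)" and dnb: "dnb \<le> \<mu> * (na + nb) + \<nu> * (na * nb)"
  shows "du + dv + (du * nb + nu * dnb) + (dv * na + nv * dna)
           \<le> (1 + R) * (2 * (K + \<mu> + \<nu>)) * err_energy nu nv na nb + (1 + R) * (2 * e)"
proof -
  let ?\<Phi> = "err_energy nu nv na nb"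
  let ?g = "K * ?\<Phi> + e"
  have \<Phi>: "0 \<le> ?\<Phi>" "nu \<le> ?\<Phi>" "nv \<le> ?\<Phi>" "nu * nb \<le> ?\<Phi>" "nv * na \<le> ?\<Phi>"
    using nonneg by (auto simp: err_energy_def)
  have g: "0 \<le> ?g" using \<Phi> assms by simp
  have R: "na \<le> R" "nb \<le> R" "0 \<le> R" using mass nonneg by auto
  have "du * nb \<le> ?g * R"
    using mult_right_mono[OF du nonneg(4)] mult_left_mono[OF R(2) g] by linarith
  moreover have "dv * na \<le> ?g * R"
    using mult_right_mono[OF dv nonneg(3)] mult_left_mono[OF R(1) g] by linarith
  moreover have "nu * dnb \<le> (\<mu> + \<nu>) * R * ?\<Phi>"
  proof -
    have "nu * dnb \<le> nu * (\<mu> * R + \<nu> * (R * nb))"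
      using assms R by (intro order_trans[OF mult_left_mono[OF dnb]] mult_left_mono add_mono mult_right_mono) auto
    also have "\<dots> = \<mu> * R * nu + \<nu> * R * (nu * nb)" by (simp add: algebra_simps)
    also have "\<dots> \<le> \<mu> * R * ?\<Phi> + \<nu> * R * ?\<Phi>"
      using \<Phi> assms R by (intro add_mono mult_left_mono) auto
    finally show ?thesis by (simp add: algebra_simps)
  qed
  moreover have "nv * dna \<le> (\<mu> + \<nu>) * R * ?\<Phi>"
  proof -
    have "nv * dna \<le> nv * (\<mu> * R + \<nu> * (na * R))"
      using assms R by (intro order_trans[OF mult_left_mono[OF dna]] mult_left_mono add_mono) auto
    also have "\<dots> = \<mu> * R * nv + \<nu> * R * (nv * na)" by (simp add: algebra_simps)
    also have "\<dots> \<le> \<mu> * R * ?\<Phi> + \<nu> * R * ?\<Phi>"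
      using \<Phi> assms R by (intro add_mono mult_left_mono) auto
    finally show ?thesis by (simp add: algebra_simps)
  qed
  moreover have "0 \<le> (\<mu> + \<nu>) * ?\<Phi>" using \<Phi> assms by simp
  ultimately show ?thesis
    using du dv by (simp add: algebra_simps)
qed

(* R bounds the mass |u|^2 + |v|^2 of a single cell, which may be as large as c / S;
   the hypothesis R S \<le> c is what keeps the Gronwall exponent (1 + R) S bounded. *)
locale err_energy_ode =
  fixes nu nv na nb du dv dna dnb :: "real \<Rightarrow> real" and S R K e \<mu> \<nu> c :: real
  assumes has_derivs: "\<And>s. s \<in> {0..S} \<Longrightarrow>
      (nu has_real_derivative du s) (at s within {0..S}) \<and> (nv has_real_derivative dv s) (at s within {0..S}) \<and>
      (na has_real_derivative dna s) (at s within {0..S}) \<and> (nb has_real_derivative dnb s) (at s within {0..S})"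
    and nonneg: "\<And>s. s \<in> {0..S} \<Longrightarrow> 0 \<le> nu s \<and> 0 \<le> nv s \<and> 0 \<le> na s \<and> 0 \<le> nb s"
    and mass: "\<And>s. s \<in> {0..S} \<Longrightarrow> na s + nb s \<le> R"
    and du_le: "\<And>s. s \<in> {0..S} \<Longrightarrow> du s \<le> K * err_energy (nu s) (nv s) (na s) (nb s) + e"
    and dv_le: "\<And>s. s \<in> {0..S} \<Longrightarrow> dv s \<le> K * err_energy (nu s) (nv s) (na s) (nb s) + e"
    and dna_le: "\<And>s. s \<in> {0..S} \<Longrightarrow> dna s \<le> \<mu> * (na s + nb s) + \<nu> * (na s * nb s)"
    and dnb_le: "\<And>s. s \<in> {0..S} \<Longrightarrow> dnb s \<le> \<mu> * (na s + nb s) + \<nu> * (na s * nb s)"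
    and coeffs: "0 \<le> K" "0 \<le> e" "0 \<le> \<mu>" "0 \<le> \<nu>"
    and interval: "0 \<le> S" "S \<le> 1" "R * S \<le> c"
begin

abbreviation energy :: "real \<Rightarrow> real" where
  "energy s \<equiv> err_energy (nu s) (nv s) (na s) (nb s)"

abbreviation growth :: real where
  "growth \<equiv> exp (2 * (K + \<mu> + \<nu>) * (1 + c))"

lemma mass_bound_nonneg: "0 \<le> R"
  using mass[of 0] nonneg[of 0] interval by force

lemma energy_le:
  assumes s: "s \<in> {0..S}"
  shows "energy s \<le> growth * (energy 0 + 2 * e * (1 + c))"
proof -
  define k where "k = (1 + R) * (2 * (K + \<mu> + \<nu>))"
  have R: "0 \<le> R" by (rule mass_bound_nonneg)
  have k: "0 \<le> k" using R coeffs by (simp add: k_def)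
  have "energy s \<le> exp (k * s) * (energy 0 + (1 + R) * (2 * e) * s)"
  proof (rule gronwall_linear[OF k _ _ _ s])
    fix r assume r: "r \<in> {0..S}"
    show "(energy has_real_derivative du r + dv r + (du r * nb r + nu r * dnb r) + (dv r * na r + nv r * dna r))
            (at r within {0..S})"
      unfolding err_energy_def using has_derivs[OF r]
      by (auto intro!: derivative_eq_intros simp: algebra_simps)
    show "du r + dv r + (du r * nb r + nu r * dnb r) + (dv r * na r + nv r * dna r) \<le> k * energy r + (1 + R) * (2 * e)"
      unfolding k_def using nonneg[OF r] coeffs
      by (intro err_energy_derivative_le mass du_le dv_le dna_le dnb_le r) auto
  qed (use R coeffs in simp)
  also have "\<dots> \<le> growth * (energy 0 + 2 * e * (1 + c))"
  proof (intro mult_mono)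
    have "k * s \<le> k * S" using s k by (simp add: mult_left_mono)
    also have "\<dots> = 2 * (K + \<mu> + \<nu>) * (S + R * S)" by (simp add: k_def algebra_simps)
    also have "\<dots> \<le> 2 * (K + \<mu> + \<nu>) * (1 + c)"
      using interval coeffs by (intro mult_left_mono add_mono) auto
    finally show "exp (k * s) \<le> growth" by simp
    have "(1 + R) * (2 * e) * s \<le> (1 + R) * (2 * e) * S" using s R coeffs by (simp add: mult_left_mono)
    also have "\<dots> = 2 * e * (S + R * S)" by (simp add: algebra_simps)
    also have "\<dots> \<le> 2 * e * (1 + c)"
      using interval coeffs by (intro mult_left_mono add_mono) auto
    finally show "energy 0 + (1 + R) * (2 * e) * s \<le> energy 0 + 2 * e * (1 + c)" by simp
    show "0 \<le> energy 0 + (1 + R) * (2 * e) * s"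
      using nonneg[of 0] interval s R coeffs by (simp add: err_energy_nonneg)
  qed simp
  finally show ?thesis .
qed

lemma nu_le: "nu S \<le> nu 0 + K * growth * energy 0 * S + (2 * K * growth * (1 + c) + 1) * e * S"
proof -
  define c' where "c' = K * growth * energy 0 + (2 * K * growth * (1 + c) + 1) * e"
  have "0 \<le> c" using order_trans[OF mult_nonneg_nonneg[OF mass_bound_nonneg interval(1)] interval(3)] .
  then have c': "0 \<le> c'"
    unfolding c'_def using nonneg[of 0] interval coeffs
    by (intro add_nonneg_nonneg mult_nonneg_nonneg err_energy_nonneg) auto
  have du_bound: "du s \<le> 0 * nu s + c'" if s: "s \<in> {0..S}" for s
  proof -
    have "du s \<le> K * energy s + e" by (rule du_le[OF s])
    also have "\<dots> \<le> K * (growth * (energy 0 + 2 * e * (1 + c))) + e"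
      using energy_le[OF s] coeffs by (simp add: mult_left_mono)
    finally show ?thesis by (simp add: c'_def algebra_simps)
  qed
  have "nu S \<le> exp (0 * S) * (nu 0 + c' * S)"
  proof (rule gronwall_linear[OF order_refl c' _ du_bound])
    fix r assume "r \<in> {0..S}"
    then show "(nu has_real_derivative du r) (at r within {0..S})" using has_derivs by blast
  qed (use interval in auto)
  then show ?thesis by (simp add: c'_def algebra_simps)
qed

end

section \<open>Local error along the characteristics\<close>

definition gronwall_factor :: "real \<Rightarrow> real \<Rightarrow> real \<Rightarrow> real \<Rightarrow> real \<Rightarrow> real" where
  "gronwall_factor m \<alpha> \<beta> M0 c0 = exp (2 * (energy_const m \<alpha> \<beta> M0 + 1 + \<bar>m\<bar> + 4 * \<bar>\<beta>\<bar>) * (1 + c0))"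

definition hatC4 :: "real \<Rightarrow> real \<Rightarrow> real \<Rightarrow> real \<Rightarrow> real \<Rightarrow> real" where
  "hatC4 m \<alpha> \<beta> M0 c0 = (energy_const m \<alpha> \<beta> M0 + 1) * gronwall_factor m \<alpha> \<beta> M0 c0"

definition hatC5 :: "real \<Rightarrow> real \<Rightarrow> real \<Rightarrow> real \<Rightarrow> real \<Rightarrow> real" where
  "hatC5 m \<alpha> \<beta> M0 c0 = (2 * hatC4 m \<alpha> \<beta> M0 c0 * (1 + c0) + 1) * (2 * nlde_lip_const m \<alpha> \<beta> M0)\<^sup>2 + 1"

lemma hatC4_pos: "0 < hatC4 m \<alpha> \<beta> M0 c0"
  by (simp add: hatC4_def gronwall_factor_def add_nonneg_pos energy_const_nonneg)

lemma hatC5_pos: "0 \<le> c0 \<Longrightarrow> 0 < hatC5 m \<alpha> \<beta> M0 c0"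
  using hatC4_pos[of m \<alpha> \<beta> M0 c0] by (simp add: hatC5_def add_nonneg_pos)

lemma hatC5_absorbs_perturbation:
  assumes "0 \<le> \<tau>" "\<tau> \<le> 1" "0 \<le> c0"
  shows "(2 * hatC4 m \<alpha> \<beta> M0 c0 * (1 + c0) + 1) * (nlde_lip_const m \<alpha> \<beta> M0 * (2 * M * \<tau>))\<^sup>2 * \<tau>
           \<le> hatC5 m \<alpha> \<beta> M0 c0 * M\<^sup>2 * \<tau>\<^sup>2"
proof -
  let ?X = "(2 * hatC4 m \<alpha> \<beta> M0 c0 * (1 + c0) + 1) * (2 * nlde_lip_const m \<alpha> \<beta> M0)\<^sup>2"
  have X: "0 \<le> ?X"
    using hatC4_pos[of m \<alpha> \<beta> M0 c0] assms(3) by (intro mult_nonneg_nonneg add_nonneg_nonneg) auto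
  have "(2 * hatC4 m \<alpha> \<beta> M0 c0 * (1 + c0) + 1) * (nlde_lip_const m \<alpha> \<beta> M0 * (2 * M * \<tau>))\<^sup>2 * \<tau>
      = ?X * (M\<^sup>2 * \<tau>\<^sup>2) * \<tau>"
    by (simp add: power_mult_distrib algebra_simps)
  also have "\<dots> \<le> ?X * (M\<^sup>2 * \<tau>\<^sup>2)"
    using X assms by (intro mult_right_le_one_le) auto
  also have "\<dots> \<le> hatC5 m \<alpha> \<beta> M0 c0 * M\<^sup>2 * \<tau>\<^sup>2"
    by (simp add: hatC5_def algebra_simps)
  finally show ?thesis .
qed

lemma characteristic_error_estimate:
  fixes P Q P' Q' a b :: "real \<Rightarrow> complex"
  assumes \<tau>: "0 < \<tau>" "\<tau> \<le> 1" and "0 \<le> c0"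
    and dP: "\<And>s. s \<in> {0..\<tau>} \<Longrightarrow> (P has_vector_derivative nldeF_component m \<alpha> \<beta> (P s) (Q' s)) (at s within {0..\<tau>})"
    and dQ: "\<And>s. s \<in> {0..\<tau>} \<Longrightarrow> (Q has_vector_derivative nldeF_component m \<alpha> \<beta> (Q s) (P' s)) (at s within {0..\<tau>})"
    and da: "\<And>s. s \<in> {0..\<tau>} \<Longrightarrow> (a has_vector_derivative nldeF_component m \<alpha> \<beta> (a s) (b s)) (at s within {0..\<tau>})"
    and db: "\<And>s. s \<in> {0..\<tau>} \<Longrightarrow> (b has_vector_derivative nldeF_component m \<alpha> \<beta> (b s) (a s)) (at s within {0..\<tau>})"
    and bounded: "\<And>s. s \<in> {0..\<tau>} \<Longrightarrow> cmod (P s) \<le> M0 \<and> cmod (Q s) \<le> M0 \<and> cmod (P' s) \<le> M0 \<and> cmod (Q' s) \<le> M0"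
    and close: "\<And>s. s \<in> {0..\<tau>} \<Longrightarrow> cmod (P' s - P s) \<le> 2 * M * \<tau> \<and> cmod (Q' s - Q s) \<le> 2 * M * \<tau>"
    and mass: "\<And>s. s \<in> {0..\<tau>} \<Longrightarrow> (cmod (a s))\<^sup>2 + (cmod (b s))\<^sup>2 \<le> R" and "R * \<tau> \<le> c0"
  shows "(cmod (P \<tau> - a \<tau>))\<^sup>2 \<le> (cmod (P 0 - a 0))\<^sup>2
           + hatC4 m \<alpha> \<beta> M0 c0 * err_energy ((cmod (P 0 - a 0))\<^sup>2) ((cmod (Q 0 - b 0))\<^sup>2) ((cmod (a 0))\<^sup>2) ((cmod (b 0))\<^sup>2) * \<tau>
           + hatC5 m \<alpha> \<beta> M0 c0 * M\<^sup>2 * \<tau>\<^sup>2"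
proof -
  let ?G = "nldeF_component m \<alpha> \<beta>" and ?K = "energy_const m \<alpha> \<beta> M0 + 1"
  interpret E: err_energy_ode "\<lambda>s. (cmod (P s - a s))\<^sup>2" "\<lambda>s. (cmod (Q s - b s))\<^sup>2" "\<lambda>s. (cmod (a s))\<^sup>2"
      "\<lambda>s. (cmod (b s))\<^sup>2" "\<lambda>s. 2 * Re (cnj (P s - a s) * (?G (P s) (Q' s) - ?G (a s) (b s)))"
      "\<lambda>s. 2 * Re (cnj (Q s - b s) * (?G (Q s) (P' s) - ?G (b s) (a s)))"
      "\<lambda>s. 2 * Re (cnj (a s) * ?G (a s) (b s))" "\<lambda>s. 2 * Re (cnj (b s) * ?G (b s) (a s))"
      \<tau> R ?K "(nlde_lip_const m \<alpha> \<beta> M0 * (2 * M * \<tau>))\<^sup>2" "\<bar>m\<bar>" "4 * \<bar>\<beta>\<bar>" c0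
  proof unfold_locales
    fix s assume s: "s \<in> {0..\<tau>}"
    show "((\<lambda>s. (cmod (P s - a s))\<^sup>2) has_real_derivative 2 * Re (cnj (P s - a s) * (?G (P s) (Q' s) - ?G (a s) (b s))))
            (at s within {0..\<tau>}) \<and>
          ((\<lambda>s. (cmod (Q s - b s))\<^sup>2) has_real_derivative 2 * Re (cnj (Q s - b s) * (?G (Q s) (P' s) - ?G (b s) (a s))))
            (at s within {0..\<tau>}) \<and>
          ((\<lambda>s. (cmod (a s))\<^sup>2) has_real_derivative 2 * Re (cnj (a s) * ?G (a s) (b s))) (at s within {0..\<tau>}) \<and>
          ((\<lambda>s. (cmod (b s))\<^sup>2) has_real_derivative 2 * Re (cnj (b s) * ?G (b s) (a s))) (at s within {0..\<tau>})"
      using dP[OF s] dQ[OF s] da[OF s] db[OF s]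
      by (intro conjI has_real_derivative_cmod_power2 derivative_intros)
    show "2 * Re (cnj (P s - a s) * (?G (P s) (Q' s) - ?G (a s) (b s)))
            \<le> ?K * err_energy ((cmod (P s - a s))\<^sup>2) ((cmod (Q s - b s))\<^sup>2) ((cmod (a s))\<^sup>2) ((cmod (b s))\<^sup>2)
              + (nlde_lip_const m \<alpha> \<beta> M0 * (2 * M * \<tau>))\<^sup>2"
      using bounded[OF s] close[OF s] by (intro Re_cnj_component_diff_perturbed_le) auto
    show "2 * Re (cnj (Q s - b s) * (?G (Q s) (P' s) - ?G (b s) (a s)))
            \<le> ?K * err_energy ((cmod (P s - a s))\<^sup>2) ((cmod (Q s - b s))\<^sup>2) ((cmod (a s))\<^sup>2) ((cmod (b s))\<^sup>2)
              + (nlde_lip_const m \<alpha> \<beta> M0 * (2 * M * \<tau>))\<^sup>2"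
      using bounded[OF s] close[OF s]
        Re_cnj_component_diff_perturbed_le[of "Q s" M0 "P s" "P' s" "2 * M * \<tau>" "b s" m \<alpha> \<beta> "a s"]
      by (simp add: err_energy_commute)
    show "2 * Re (cnj (a s) * ?G (a s) (b s))
            \<le> \<bar>m\<bar> * ((cmod (a s))\<^sup>2 + (cmod (b s))\<^sup>2) + 4 * \<bar>\<beta>\<bar> * ((cmod (a s))\<^sup>2 * (cmod (b s))\<^sup>2)"
      using Re_cnj_component_self_le[of "a s" m \<alpha> \<beta> "b s"] by (simp add: ac_simps)
    show "2 * Re (cnj (b s) * ?G (b s) (a s))
            \<le> \<bar>m\<bar> * ((cmod (a s))\<^sup>2 + (cmod (b s))\<^sup>2) + 4 * \<bar>\<beta>\<bar> * ((cmod (a s))\<^sup>2 * (cmod (b s))\<^sup>2)"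
      by (rule Re_cnj_component_self_le)
    show "(cmod (a s))\<^sup>2 + (cmod (b s))\<^sup>2 \<le> R" by (rule mass[OF s])
  qed (use \<tau> \<open>R * \<tau> \<le> c0\<close> energy_const_nonneg[of m \<alpha> \<beta> M0] in simp_all)
  have C4: "?K * exp (2 * (?K + \<bar>m\<bar> + 4 * \<bar>\<beta>\<bar>) * (1 + c0)) = hatC4 m \<alpha> \<beta> M0 c0"
    by (simp add: hatC4_def gronwall_factor_def)
  then have two_C4: "2 * ?K * exp (2 * (?K + \<bar>m\<bar> + 4 * \<bar>\<beta>\<bar>) * (1 + c0)) = 2 * hatC4 m \<alpha> \<beta> M0 c0"
    by (simp only: mult.assoc)
  show ?thesis
    using E.nu_le[unfolded C4 two_C4] hatC5_absorbs_perturbation[of \<tau> c0 m \<alpha> \<beta> M0 M] \<tau> \<open>0 \<le> c0\<close>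
    by linarith
qed

lemma has_vector_derivative_along_line:
  fixes f :: "real \<Rightarrow> real \<Rightarrow> complex"
  assumes d: "((\<lambda>p. f (fst p) (snd p)) has_derivative (\<lambda>h. of_real (fst h) * fx + of_real (snd h) * ft))
                (at (x0 + c * s, t0 + d * s) within X)"
    and sub: "\<And>r. r \<in> S \<Longrightarrow> (x0 + c * r, t0 + d * r) \<in> X"
  shows "((\<lambda>r. f (x0 + c * r) (t0 + d * r)) has_vector_derivative of_real c * fx + of_real d * ft) (at s within S)"
proof -
  define \<gamma> where "\<gamma> r = (x0 + c * r, t0 + d * r)" for r
  have "(\<gamma> has_derivative (\<lambda>h. (c * h, d * h))) (at s within S)"
    unfolding \<gamma>_def by (auto intro!: derivative_eq_intros)
  moreover have "((\<lambda>p. f (fst p) (snd p)) has_derivative (\<lambda>h. of_real (fst h) * fx + of_real (snd h) * ft))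
                   (at (\<gamma> s) within \<gamma> ` S)"
    using has_derivative_subset[OF d, of "\<gamma> ` S"] sub by (auto simp: \<gamma>_def)
  ultimately have "((\<lambda>r. f (fst (\<gamma> r)) (snd (\<gamma> r))) has_derivative
                      (\<lambda>h. of_real (c * h) * fx + of_real (d * h) * ft)) (at s within S)"
    using diff_chain_within by (fastforce simp: o_def)
  then show ?thesis
    by (simp add: \<gamma>_def has_vector_derivative_def scaleR_conv_of_real algebra_simps)
qed

lemma lipschitz_on_slice:
  fixes f :: "real \<Rightarrow> real \<Rightarrow> complex"
  assumes d: "\<And>x. ((\<lambda>p. f (fst p) (snd p)) has_derivative (\<lambda>h. of_real (fst h) * fx x + of_real (snd h) * ft x))
                (at (x, t) within UNIV \<times> {0..T})"
    and t: "t \<in> {0..T}" and bnd: "\<And>x. cmod (fx x) \<le> M"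
  shows "M-lipschitz_on UNIV (\<lambda>x. f x t)"
proof (rule bounded_derivative_imp_lipschitz)
  fix x :: real
  have "((\<lambda>r. f (0 + 1 * r) (t + 0 * r)) has_vector_derivative of_real 1 * fx x + of_real 0 * ft x) (at x within UNIV)"
    using t by (intro has_vector_derivative_along_line) (use d in auto)
  then show "((\<lambda>x. f x t) has_derivative (\<lambda>h. h *\<^sub>R fx x)) (at x within UNIV)"
    by (simp add: has_vector_derivative_def)
  show "onorm (\<lambda>h. h *\<^sub>R fx x) \<le> M"
    by (intro onorm_le) (simp add: mult_left_mono[OF bnd] mult.commute[of M])
next
  show "0 \<le> M" using order_trans[OF norm_ge_zero bnd] .
qed simp

lemma nlde_solution_along_characteristics:
  assumes sol: "nlde_solution m \<alpha> \<beta> T uh vh ux ut vx vt"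
    and t: "\<And>r. r \<in> {0..\<tau>} \<Longrightarrow> t0 + r \<in> {0..T}" and s: "s \<in> {0..\<tau>}"
  shows "((\<lambda>r. uh (x + r) (t0 + r)) has_vector_derivative
            nldeF_component m \<alpha> \<beta> (uh (x + s) (t0 + s)) (vh (x + s) (t0 + s))) (at s within {0..\<tau>})"
    and "((\<lambda>r. vh (x - r) (t0 + r)) has_vector_derivative
            nldeF_component m \<alpha> \<beta> (vh (x - s) (t0 + s)) (uh (x - s) (t0 + s))) (at s within {0..\<tau>})"
proof -
  have "t0 + s \<in> {0..T}" using t[OF s] .
  then have du: "((\<lambda>p. uh (fst p) (snd p)) has_derivative (\<lambda>h. of_real (fst h) * ux y (t0 + s) + of_real (snd h) * ut y (t0 + s)))
                   (at (y, t0 + s) within UNIV \<times> {0..T})"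
    and dv: "((\<lambda>p. vh (fst p) (snd p)) has_derivative (\<lambda>h. of_real (fst h) * vx y (t0 + s) + of_real (snd h) * vt y (t0 + s)))
                   (at (y, t0 + s) within UNIV \<times> {0..T})"
    and eqn: "ut y (t0 + s) + ux y (t0 + s) = nldeF_component m \<alpha> \<beta> (uh y (t0 + s)) (vh y (t0 + s))"
             "vt y (t0 + s) - vx y (t0 + s) = nldeF_component m \<alpha> \<beta> (vh y (t0 + s)) (uh y (t0 + s))" for y
    using sol by (auto simp: nlde_solution_def nldeF_Pair)
  have "((\<lambda>r. uh (x + 1 * r) (t0 + 1 * r)) has_vector_derivative of_real 1 * ux (x + s) (t0 + s) + of_real 1 * ut (x + s) (t0 + s))
          (at s within {0..\<tau>})"
    using du t by (intro has_vector_derivative_along_line) auto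
  then show "((\<lambda>r. uh (x + r) (t0 + r)) has_vector_derivative
            nldeF_component m \<alpha> \<beta> (uh (x + s) (t0 + s)) (vh (x + s) (t0 + s))) (at s within {0..\<tau>})"
    using eqn(1)[of "x + s"] by (simp add: add.commute)
  have "((\<lambda>r. vh (x + -1 * r) (t0 + 1 * r)) has_vector_derivative of_real (-1) * vx (x - s) (t0 + s) + of_real 1 * vt (x - s) (t0 + s))
          (at s within {0..\<tau>})"
    using dv t by (intro has_vector_derivative_along_line) auto
  then show "((\<lambda>r. vh (x - r) (t0 + r)) has_vector_derivative
            nldeF_component m \<alpha> \<beta> (vh (x - s) (t0 + s)) (uh (x - s) (t0 + s))) (at s within {0..\<tau>})"
    using eqn(2)[of "x - s"] by simp
qed

lemma nlde_solution_lipschitz_in_x: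
  assumes sol: "nlde_solution m \<alpha> \<beta> T uh vh ux ut vx vt" and t: "t \<in> {0..T}"
    and slopes: "\<And>x. cmod (ux x t) \<le> M \<and> cmod (vx x t) \<le> M"
  shows "M-lipschitz_on UNIV (\<lambda>x. uh x t)" and "M-lipschitz_on UNIV (\<lambda>x. vh x t)"
proof -
  show "M-lipschitz_on UNIV (\<lambda>x. uh x t)"
    by (rule lipschitz_on_slice[where fx = "\<lambda>x. ux x t" and ft = "\<lambda>x. ut x t", OF _ t])
       (use sol t slopes in \<open>auto simp: nlde_solution_def\<close>)
  show "M-lipschitz_on UNIV (\<lambda>x. vh x t)"
    by (rule lipschitz_on_slice[where fx = "\<lambda>x. vx x t" and ft = "\<lambda>x. vt x t", OF _ t])
       (use sol t slopes in \<open>auto simp: nlde_solution_def\<close>)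
qed

(* Along its characteristic u is driven by v at the same point, which lies at distance
   |2\<tau> - 2 s| \<le> 2\<tau> from the point where V sees v: hence the perturbation 2 M \<tau>. *)
lemma nlde_characteristic_error:
  fixes uh vh ux ut vx vt :: "real \<Rightarrow> real \<Rightarrow> complex" and a b :: "real \<Rightarrow> complex" and x t0 :: real
  assumes sol: "nlde_solution m \<alpha> \<beta> T uh vh ux ut vx vt"
    and bounded: "\<And>x t. t \<in> {0..T} \<Longrightarrow> cmod (uh x t) \<le> M0 \<and> cmod (vh x t) \<le> M0"
    and slopes: "\<And>x t. t \<in> {0..T} \<Longrightarrow> cmod (ux x t) \<le> M \<and> cmod (vx x t) \<le> M"
    and \<tau>: "0 < \<tau>" "\<tau> \<le> 1" and "0 \<le> c0" and t0: "0 \<le> t0" "t0 + \<tau> \<le> T"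
    and da: "\<And>s. s \<in> {0..\<tau>} \<Longrightarrow> (a has_vector_derivative nldeF_component m \<alpha> \<beta> (a s) (b s)) (at s within {0..\<tau>})"
    and db: "\<And>s. s \<in> {0..\<tau>} \<Longrightarrow> (b has_vector_derivative nldeF_component m \<alpha> \<beta> (b s) (a s)) (at s within {0..\<tau>})"
    and mass: "\<And>s. s \<in> {0..\<tau>} \<Longrightarrow> (cmod (a s))\<^sup>2 + (cmod (b s))\<^sup>2 \<le> R" and "R * \<tau> \<le> c0"
  defines "U s \<equiv> uh (x + s) (t0 + s) - a s" and "V s \<equiv> vh (x + 2 * \<tau> - s) (t0 + s) - b s"
  shows "(cmod (U \<tau>))\<^sup>2 \<le> (cmod (U 0))\<^sup>2
           + hatC4 m \<alpha> \<beta> M0 c0 * err_energy ((cmod (U 0))\<^sup>2) ((cmod (V 0))\<^sup>2) ((cmod (a 0))\<^sup>2) ((cmod (b 0))\<^sup>2) * \<tau>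
           + hatC5 m \<alpha> \<beta> M0 c0 * M\<^sup>2 * \<tau>\<^sup>2"
    and "(cmod (V \<tau>))\<^sup>2 \<le> (cmod (V 0))\<^sup>2
           + hatC4 m \<alpha> \<beta> M0 c0 * err_energy ((cmod (U 0))\<^sup>2) ((cmod (V 0))\<^sup>2) ((cmod (a 0))\<^sup>2) ((cmod (b 0))\<^sup>2) * \<tau>
           + hatC5 m \<alpha> \<beta> M0 c0 * M\<^sup>2 * \<tau>\<^sup>2"
proof -
  define P Q' Q P' where "P s = uh (x + s) (t0 + s)" and "Q' s = vh (x + s) (t0 + s)"
    and "Q s = vh (x + 2 * \<tau> - s) (t0 + s)" and "P' s = uh (x + 2 * \<tau> - s) (t0 + s)" for s
  have t: "t0 + r \<in> {0..T}" if "r \<in> {0..\<tau>}" for r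
    using that t0 by auto
  have dP: "(P has_vector_derivative nldeF_component m \<alpha> \<beta> (P s) (Q' s)) (at s within {0..\<tau>})"
    and dQ: "(Q has_vector_derivative nldeF_component m \<alpha> \<beta> (Q s) (P' s)) (at s within {0..\<tau>})"
    if "s \<in> {0..\<tau>}" for s
    using nlde_solution_along_characteristics[OF sol t that, of x] nlde_solution_along_characteristics[OF sol t that, of "x + 2 * \<tau>"]
    unfolding P_def[abs_def] Q'_def Q_def[abs_def] P'_def by auto
  have bounds: "cmod (P s) \<le> M0 \<and> cmod (Q s) \<le> M0 \<and> cmod (P' s) \<le> M0 \<and> cmod (Q' s) \<le> M0"
    if "s \<in> {0..\<tau>}" for s
    using bounded[OF t[OF that]] by (simp add: P_def Q_def P'_def Q'_def)
  have close: "cmod (P' s - P s) \<le> 2 * M * \<tau> \<and> cmod (Q' s - Q s) \<le> 2 * M * \<tau>" if s: "s \<in> {0..\<tau>}" for s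
  proof -
    have "cmod (ux x (t0 + s)) \<le> M" using slopes t[OF s] by simp
    then have M: "0 \<le> M" using norm_ge_zero order_trans by blast
    have "\<bar>(x + 2 * \<tau> - s) - (x + s)\<bar> \<le> 2 * \<tau>" using s by auto
    from mult_left_mono[OF this M]
    have "M * \<bar>(x + 2 * \<tau> - s) - (x + s)\<bar> \<le> 2 * M * \<tau>" by simp
    with nlde_solution_lipschitz_in_x[OF sol t[OF s] slopes[OF t[OF s]]] show ?thesis
      unfolding P_def P'_def Q_def Q'_def
      by (smt (verit, best) abs_minus_commute lipschitz_on_normD norm_minus_commute real_norm_def UNIV_I)
  qed
  have "(cmod (P \<tau> - a \<tau>))\<^sup>2 \<le> (cmod (P 0 - a 0))\<^sup>2
      + hatC4 m \<alpha> \<beta> M0 c0 * err_energy ((cmod (P 0 - a 0))\<^sup>2) ((cmod (Q 0 - b 0))\<^sup>2) ((cmod (a 0))\<^sup>2) ((cmod (b 0))\<^sup>2) * \<tau>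
      + hatC5 m \<alpha> \<beta> M0 c0 * M\<^sup>2 * \<tau>\<^sup>2"
    by (rule characteristic_error_estimate[OF \<tau> \<open>0 \<le> c0\<close> dP dQ da db bounds close mass \<open>R * \<tau> \<le> c0\<close>])
  moreover have "(cmod (Q \<tau> - b \<tau>))\<^sup>2 \<le> (cmod (Q 0 - b 0))\<^sup>2
      + hatC4 m \<alpha> \<beta> M0 c0 * err_energy ((cmod (Q 0 - b 0))\<^sup>2) ((cmod (P 0 - a 0))\<^sup>2) ((cmod (b 0))\<^sup>2) ((cmod (a 0))\<^sup>2) * \<tau>
      + hatC5 m \<alpha> \<beta> M0 c0 * M\<^sup>2 * \<tau>\<^sup>2"
    using bounds close mass
    by (intro characteristic_error_estimate[where P' = Q' and Q' = P', OF \<tau> \<open>0 \<le> c0\<close> dQ dP db da _ _ _ \<open>R * \<tau> \<le> c0\<close>])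
       (auto simp: add.commute)
  ultimately show "(cmod (U \<tau>))\<^sup>2 \<le> (cmod (U 0))\<^sup>2
           + hatC4 m \<alpha> \<beta> M0 c0 * err_energy ((cmod (U 0))\<^sup>2) ((cmod (V 0))\<^sup>2) ((cmod (a 0))\<^sup>2) ((cmod (b 0))\<^sup>2) * \<tau>
           + hatC5 m \<alpha> \<beta> M0 c0 * M\<^sup>2 * \<tau>\<^sup>2"
    and "(cmod (V \<tau>))\<^sup>2 \<le> (cmod (V 0))\<^sup>2
           + hatC4 m \<alpha> \<beta> M0 c0 * err_energy ((cmod (U 0))\<^sup>2) ((cmod (V 0))\<^sup>2) ((cmod (a 0))\<^sup>2) ((cmod (b 0))\<^sup>2) * \<tau>
           + hatC5 m \<alpha> \<beta> M0 c0 * M\<^sup>2 * \<tau>\<^sup>2"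
    by (simp_all only: U_def V_def P_def Q_def err_energy_commute)
qed

lemma local_error_estimate:
  fixes uh vh ux ut vx vt :: "real \<Rightarrow> real \<Rightarrow> complex" and u0 v0 :: "int \<Rightarrow> complex"
  assumes sol: "nlde_solution m \<alpha> \<beta> T uh vh ux ut vx vt"
    and bounded: "\<And>x t. t \<in> {0..T} \<Longrightarrow> cmod (uh x t) \<le> M0 \<and> cmod (vh x t) \<le> M0"
    and slopes: "\<And>x t. t \<in> {0..T} \<Longrightarrow> cmod (ux x t) \<le> M \<and> cmod (vx x t) \<le> M"
    and \<tau>: "0 < \<tau>" "\<tau> < 1" and "0 \<le> c0"
    and mass: "((\<lambda>j. (cmod (u0 j))\<^sup>2 + (cmod (v0 j))\<^sup>2) has_sum N) UNIV" "N * \<tau> \<le> c0"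
    and n: "(real n + 1) * \<tau> \<le> T"
  shows "let w = (\<lambda>s. flowN m \<alpha> \<beta> s (ts_left m \<alpha> \<beta> \<tau> u0 v0 n (of_int (j + 1) * \<tau>)));
             U = (\<lambda>s. uh (of_int j * \<tau> + s) (real n * \<tau> + s) - fst (w s));
             V = (\<lambda>s. vh (of_int (j + 2) * \<tau> - s) (real n * \<tau> + s) - snd (w s));
             L = (cmod (U 0))\<^sup>2 + (cmod (V 0))\<^sup>2;
             D = (cmod (U 0))\<^sup>2 * (cmod (snd (w 0)))\<^sup>2 + (cmod (V 0))\<^sup>2 * (cmod (fst (w 0)))\<^sup>2
         in (cmod (U \<tau>))\<^sup>2 \<le> (cmod (U 0))\<^sup>2 + hatC4 m \<alpha> \<beta> M0 c0 * (L + D) * \<tau> + hatC5 m \<alpha> \<beta> M0 c0 * M\<^sup>2 * \<tau>\<^sup>2 \<and>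
            (cmod (V \<tau>))\<^sup>2 \<le> (cmod (V 0))\<^sup>2 + hatC4 m \<alpha> \<beta> M0 c0 * (L + D) * \<tau> + hatC5 m \<alpha> \<beta> M0 c0 * M\<^sup>2 * \<tau>\<^sup>2"
proof -
  let ?p = "ts_left m \<alpha> \<beta> \<tau> u0 v0 n (of_int (j + 1) * \<tau>)"
  obtain a b where flow: "\<And>s. s \<in> {0..\<tau>} \<Longrightarrow> flowN m \<alpha> \<beta> s ?p = (a s, b s)"
    and da: "\<And>s. s \<in> {0..\<tau>} \<Longrightarrow> (a has_vector_derivative nldeF_component m \<alpha> \<beta> (a s) (b s)) (at s within {0..\<tau>})"
    and db: "\<And>s. s \<in> {0..\<tau>} \<Longrightarrow> (b has_vector_derivative nldeF_component m \<alpha> \<beta> (b s) (a s)) (at s within {0..\<tau>})"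
    and norm_ab: "\<And>s. s \<in> {0..\<tau>} \<Longrightarrow> (cmod (a s))\<^sup>2 + (cmod (b s))\<^sup>2 = (norm ?p)\<^sup>2"
    using flowN_components[of \<tau> m \<alpha> \<beta> ?p] \<tau> by auto
  have R: "(cmod (a s))\<^sup>2 + (cmod (b s))\<^sup>2 \<le> N" if "s \<in> {0..\<tau>}" for s
    using norm_ab[OF that] norm_ts_left_power2_le[OF \<tau>(1) mass(1)] by simp
  have "0 \<le> real n * \<tau>" "real n * \<tau> + \<tau> \<le> T" using \<tau> n by (auto simp: algebra_simps)
  note estimates = nlde_characteristic_error[OF sol bounded slopes \<tau>(1) less_imp_le[OF \<tau>(2)] \<open>0 \<le> c0\<close> this
      da db R mass(2), of "of_int j * \<tau>"]
  have "of_int (j + 2) * \<tau> = of_int j * \<tau> + 2 * \<tau>" by (simp add: algebra_simps)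
  then show ?thesis
    using estimates flow[of 0] flow[of \<tau>] \<tau> by (simp add: Let_def err_energy_def add.assoc)
qed

theorem lemma4p4:
  fixes m \<alpha> \<beta> :: real
  assumes "m \<ge> 0"
  shows "\<forall>c0 M0 M :: real. c0 > 0 \<longrightarrow>
    (\<exists>C4 C5 :: real. C4 > 0 \<and> C5 > 0 \<and>
      (\<forall>(T::real) uh vh ux ut vx vt.
         T > 0 \<longrightarrow> nlde_solution m \<alpha> \<beta> T uh vh ux ut vx vt \<longrightarrow>
         bdd_above ((\<lambda>(x, t). cmod (uh x t) + cmod (vh x t) + 1) ` (UNIV \<times> {0..T})) \<longrightarrow>
         bdd_above ((\<lambda>(x, t). cmod (ut x t) + cmod (ux x t) + cmod (vt x t) + cmod (vx x t) + 1)
                      ` (UNIV \<times> {0..T})) \<longrightarrow>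
         M0 = (SUP (x, t)\<in>UNIV \<times> {0..T}. cmod (uh x t) + cmod (vh x t) + 1) \<longrightarrow>
         M = (SUP (x, t)\<in>UNIV \<times> {0..T}. cmod (ut x t) + cmod (ux x t) + cmod (vt x t) + cmod (vx x t) + 1) \<longrightarrow>
         (\<forall>(\<tau>::real) (u0::int \<Rightarrow> complex) (v0::int \<Rightarrow> complex).
            0 < \<tau> \<longrightarrow> \<tau> < 1 \<longrightarrow>
            (\<lambda>j. (cmod (u0 j))\<^sup>2 + (cmod (v0 j))\<^sup>2) summable_on UNIV \<longrightarrow>
            (\<Sum>\<^sub>\<infinity>j. (cmod (u0 j))\<^sup>2 + (cmod (v0 j))\<^sup>2) * \<tau> \<le> c0 \<longrightarrow>
            (\<forall>(j::int) (n::nat). (real n + 1) * \<tau> \<le> T \<longrightarrow>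
              (let w = (\<lambda>s. flowN m \<alpha> \<beta> s (ts_left m \<alpha> \<beta> \<tau> u0 v0 n (of_int (j + 1) * \<tau>)));
                   U = (\<lambda>s. uh (of_int j * \<tau> + s) (real n * \<tau> + s) - fst (w s));
                   V = (\<lambda>s. vh (of_int (j + 2) * \<tau> - s) (real n * \<tau> + s) - snd (w s));
                   L = (cmod (U 0))\<^sup>2 + (cmod (V 0))\<^sup>2;
                   D = (cmod (U 0))\<^sup>2 * (cmod (snd (w 0)))\<^sup>2 + (cmod (V 0))\<^sup>2 * (cmod (fst (w 0)))\<^sup>2
               in (cmod (U \<tau>))\<^sup>2 \<le> (cmod (U 0))\<^sup>2 + C4 * (L + D) * \<tau> + C5 * M\<^sup>2 * \<tau>\<^sup>2 \<and>
                  (cmod (V \<tau>))\<^sup>2 \<le> (cmod (V 0))\<^sup>2 + C4 * (L + D) * \<tau> + C5 * M\<^sup>2 * \<tau>\<^sup>2)))))"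
  \<comment> \<open>the estimate holds for every m\<close>
  apply (intro allI impI)
  subgoal for c0 M0 M
    apply (rule exI[of _ "hatC4 m \<alpha> \<beta> M0 c0"], rule exI[of _ "hatC5 m \<alpha> \<beta> M0 c0"])
    apply (intro conjI allI impI)
    subgoal by (rule hatC4_pos)
    subgoal by (simp add: hatC5_pos)
    subgoal premises prems for T uh vh ux ut vx vt \<tau> u0 v0 j n
    proof (rule local_error_estimate[OF prems(3) _ _ prems(8,9) _ has_sum_infsum[OF prems(10)] prems(11,12)])
      fix x t assume "t \<in> {0..T}"
      then have "cmod (uh x t) + cmod (vh x t) + 1 \<le> M0"
        and "cmod (ut x t) + cmod (ux x t) + cmod (vt x t) + cmod (vx x t) + 1 \<le> M"
        unfolding prems(6,7) using cSUP_upper[OF _ prems(4), of "(x, t)"] cSUP_upper[OF _ prems(5), of "(x, t)"]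
        by auto
      then show "cmod (uh x t) \<le> M0 \<and> cmod (vh x t) \<le> M0" "cmod (ux x t) \<le> M \<and> cmod (vx x t) \<le> M"
        by (smt (verit) norm_ge_zero)+
    qed (use prems(1) in simp)
    done
  done

end
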